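(* Let $H$ be a complex infinite-dimensional separable Hilbert space, $\bar e=(e_n)_{n\in\mathbb N}$ an orthonormal basis of $H$, $p_n$ the rank-one projection onto $\mathbb C e_n$, $D(\bar e)$ the algebra of operators diagonalised by $\bar e$, and $\mathbb E_{\bar e}\colon\mathcal B(H)\to D(\bar e)$, $\mathbb E_{\bar e}(a)=\sum_n p_nap_n$ (strong sum). Let $(b_n)_{n\in\mathbb N}$ be a sequence of compact operators on $H$ converging to $0$ in the strong operator topology, such that for every $M\subseteq\mathbb N$ the sum $\sum_{n\in M}b_n$ exists (in the strong operator topology) and belongs to $D(\bar e)+\mathcal K(H)$. Then $\lim_n\|\mathbb E_{\bar e}(b_n)-b_n\|=0$.
   Context: $\mathcal K(H)$ denotes the compact operators on $H$. A sequence is SOT-null if it converges to $0$ in the strong operator topology (pointwise in norm). *)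

theory Defs
  imports "HOL-Analysis.Analysis" "HOL-Library.Function_Algebras"
begin

text \<open>Concrete model of a complex infinite-dimensional separable Hilbert space:
  H = l2(nat), complex square-summable sequences. Vectors are functions
  nat => complex; operators are maps (nat => complex) => (nat => complex),
  only their values on the carrier l2 matter.\<close>

definition ell2 :: "(nat \<Rightarrow> complex) set" where
  "ell2 = {x. summable (\<lambda>k. (cmod (x k))\<^sup>2)}"

definition l2norm :: "(nat \<Rightarrow> complex) \<Rightarrow> real" where
  "l2norm x = sqrt (\<Sum>k. (cmod (x k))\<^sup>2)"

definition l2inner :: "(nat \<Rightarrow> complex) \<Rightarrow> (nat \<Rightarrow> complex) \<Rightarrow> complex" where
  "l2inner x y = (\<Sum>k. x k * cnj (y k))"

definition scaleC_vec :: "complex \<Rightarrow> (nat \<Rightarrow> complex) \<Rightarrow> (nat \<Rightarrow> complex)" where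
  "scaleC_vec c x = (\<lambda>k. c * x k)"

definition bounded_op :: "((nat \<Rightarrow> complex) \<Rightarrow> (nat \<Rightarrow> complex)) \<Rightarrow> bool" where
  "bounded_op T \<longleftrightarrow>
     (\<forall>x\<in>ell2. T x \<in> ell2) \<and>
     (\<forall>x\<in>ell2. \<forall>y\<in>ell2. T (x + y) = T x + T y) \<and>
     (\<forall>c. \<forall>x\<in>ell2. T (scaleC_vec c x) = scaleC_vec c (T x)) \<and>
     (\<exists>K. \<forall>x\<in>ell2. l2norm (T x) \<le> K * l2norm x)"

definition opnorm :: "((nat \<Rightarrow> complex) \<Rightarrow> (nat \<Rightarrow> complex)) \<Rightarrow> real" where
  "opnorm T = (SUP x\<in>{x\<in>ell2. l2norm x \<le> 1}. l2norm (T x))"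

definition compact_op :: "((nat \<Rightarrow> complex) \<Rightarrow> (nat \<Rightarrow> complex)) \<Rightarrow> bool" where
  "compact_op T \<longleftrightarrow> bounded_op T \<and>
     (\<forall>x::nat \<Rightarrow> (nat \<Rightarrow> complex). (\<forall>n. x n \<in> ell2 \<and> l2norm (x n) \<le> 1) \<longrightarrow>
        (\<exists>r y. strict_mono r \<and> y \<in> ell2 \<and> (\<lambda>n. l2norm (T (x (r n)) - y)) \<longlonglongrightarrow> 0))"

definition onb :: "(nat \<Rightarrow> (nat \<Rightarrow> complex)) \<Rightarrow> bool" where
  "onb e \<longleftrightarrow> (\<forall>n. e n \<in> ell2) \<and>
     (\<forall>m n. l2inner (e m) (e n) = (if m = n then 1 else 0)) \<and>
     (\<forall>x\<in>ell2. (\<forall>n. l2inner x (e n) = 0) \<longrightarrow> x = 0)"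

definition proj :: "(nat \<Rightarrow> (nat \<Rightarrow> complex)) \<Rightarrow> nat \<Rightarrow> (nat \<Rightarrow> complex) \<Rightarrow> (nat \<Rightarrow> complex)" where
  "proj e n x = scaleC_vec (l2inner x (e n)) (e n)"

definition diag_op :: "(nat \<Rightarrow> (nat \<Rightarrow> complex)) \<Rightarrow> ((nat \<Rightarrow> complex) \<Rightarrow> (nat \<Rightarrow> complex)) \<Rightarrow> bool" where
  "diag_op e T \<longleftrightarrow> bounded_op T \<and> (\<forall>n. \<exists>c. T (e n) = scaleC_vec c (e n))"

definition has_sot_sum ::
  "(nat \<Rightarrow> ((nat \<Rightarrow> complex) \<Rightarrow> (nat \<Rightarrow> complex))) \<Rightarrow> nat set \<Rightarrow> ((nat \<Rightarrow> complex) \<Rightarrow> (nat \<Rightarrow> complex)) \<Rightarrow> bool" where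
  "has_sot_sum b M S \<longleftrightarrow> bounded_op S \<and>
     (\<forall>x\<in>ell2. \<forall>\<epsilon>>0. \<exists>F0. finite F0 \<and> F0 \<subseteq> M \<and>
        (\<forall>F. finite F \<and> F0 \<subseteq> F \<and> F \<subseteq> M \<longrightarrow> l2norm (S x - (\<Sum>n\<in>F. b n x)) < \<epsilon>))"

definition cond_exp :: "(nat \<Rightarrow> (nat \<Rightarrow> complex)) \<Rightarrow> ((nat \<Rightarrow> complex) \<Rightarrow> (nat \<Rightarrow> complex)) \<Rightarrow> ((nat \<Rightarrow> complex) \<Rightarrow> (nat \<Rightarrow> complex))" where
  "cond_exp e a = (SOME S. has_sot_sum (\<lambda>n. proj e n \<circ> a \<circ> proj e n) UNIV S)"

definition in_diag_plus_compact :: "(nat \<Rightarrow> (nat \<Rightarrow> complex)) \<Rightarrow> ((nat \<Rightarrow> complex) \<Rightarrow> (nat \<Rightarrow> complex)) \<Rightarrow> bool" where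
  "in_diag_plus_compact e S \<longleftrightarrow> (\<exists>d c. diag_op e d \<and> compact_op c \<and> (\<forall>x\<in>ell2. S x = d x + c x))"

definition sot_null :: "(nat \<Rightarrow> ((nat \<Rightarrow> complex) \<Rightarrow> (nat \<Rightarrow> complex))) \<Rightarrow> bool" where
  "sot_null b \<longleftrightarrow> (\<forall>x\<in>ell2. (\<lambda>n. l2norm (b n x)) \<longlonglongrightarrow> 0)"

end

theory Submission
  imports Defs
begin

text \<open>Write \<open>a k = \<bbbE>(b k) - b k\<close>. If \<open>\<parallel>a k\<parallel>\<close> does not tend to zero, a gliding hump argument
  produces a subsequence \<open>b (n k)\<close>, disjoint consecutive blocks of the basis and unit vectors
  \<open>x k\<close> spanned by the \<open>k\<close>-th block, such that the off-diagonal part of \<open>b (n k)\<close> is large on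
  \<open>x k\<close> while every other \<open>b (n j)\<close> is tiny on the \<open>k\<close>-th block: for \<open>j > k\<close> because \<open>b\<close> is
  SOT-null on the finitely many earlier basis vectors, for \<open>j < k\<close> because the compact operator
  \<open>b (n j)\<close> is small on vectors far out in the basis. So the off-diagonal part of
  \<open>S = (\<Sum>k. b (n k))\<close> is large on every \<open>x k\<close>. But \<open>S = d + c\<close> with \<open>d\<close> diagonal and \<open>c\<close>
  compact: \<open>d\<close> has no off-diagonal part and \<open>c\<close> is small on \<open>x k\<close> for large \<open>k\<close>.

  Vectors are modelled by the type \<open>l2\<close> of square-summable sequences, a real inner product space
  in the sense of HOL-Analysis, with complex scalars handled by \<open>cscale\<close> and \<open>cinner\<close>; the
  operators of the statement act on all sequences and are restricted to \<open>l2\<close> by \<open>l2_op\<close>.\<close>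

lemma suminf_shift_tendsto_zero:
  fixes f :: "nat \<Rightarrow> real"
  assumes "summable f"
  shows "(\<lambda>n. \<Sum>i. f (i + n)) \<longlonglongrightarrow> 0"
proof -
  have "(\<lambda>n. suminf f - (\<Sum>i<n. f i)) \<longlonglongrightarrow> suminf f - suminf f"
    by (intro tendsto_diff tendsto_const summable_LIMSEQ assms)
  thus ?thesis
    by (simp add: suminf_minus_initial_segment[OF assms])
qed

lemma sum_le_suminf_shift:
  fixes f :: "nat \<Rightarrow> real"
  assumes "summable f" "\<And>i. 0 \<le> f i" "finite A" "A \<subseteq> {K..}"
  shows "sum f A \<le> (\<Sum>i. f (i + K))"
proof -
  have "inj_on (\<lambda>i. i - K) A"
  proof (rule inj_onI)
    fix x y
    assume "x \<in> A" "y \<in> A" "x - K = y - K"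
    moreover have "x \<ge> K" "y \<ge> K"
      using assms(4) \<open>x \<in> A\<close> \<open>y \<in> A\<close> by auto
    ultimately show "x = y"
      by arith
  qed
  hence "sum f A = sum (\<lambda>j. f (j + K)) ((\<lambda>i. i - K) ` A)"
    using assms(4) by (subst sum.reindex) (auto intro!: sum.cong)
  also have "\<dots> \<le> (\<Sum>i. f (i + K))"
    using assms by (intro sum_le_suminf summable_ignore_initial_segment) auto
  finally show ?thesis .
qed

lemma sum_geometric_le:
  fixes \<eta> :: real
  assumes "finite J" "\<eta> \<ge> 0"
  shows "(\<Sum>j\<in>J. 2 * (\<eta> / 2 ^ (j + 4))) \<le> \<eta> / 4"
proof -
  have "(\<Sum>j\<in>J. (1 / 2 :: real) ^ j) \<le> (\<Sum>j. (1 / 2) ^ j)"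
    by (rule sum_le_suminf[OF summable_geometric assms(1)]) simp_all
  also have "(\<Sum>j. (1 / 2 :: real) ^ j) = 2"
    by (simp add: suminf_geometric)
  finally have "\<eta> / 8 * (\<Sum>j\<in>J. (1 / 2) ^ j) \<le> \<eta> / 8 * 2"
    by (rule mult_left_mono) (simp add: assms(2))
  moreover have "(\<Sum>j\<in>J. 2 * (\<eta> / 2 ^ (j + 4))) = \<eta> / 8 * (\<Sum>j\<in>J. (1 / 2) ^ j)"
    by (simp add: sum_distrib_left power_add power_one_over field_simps)
  ultimately show ?thesis
    by simp
qed

lemma norm_le_1_of_sum_sq_le_1:
  fixes \<alpha> :: "nat \<Rightarrow> complex"
  assumes "finite I" "(\<Sum>i\<in>I. (cmod (\<alpha> i))\<^sup>2) \<le> 1" "i \<in> I"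
  shows "cmod (\<alpha> i) \<le> 1"
proof -
  have "(cmod (\<alpha> i))\<^sup>2 \<le> (\<Sum>i\<in>I. (cmod (\<alpha> i))\<^sup>2)"
    by (rule member_le_sum[OF assms(3)]) (simp_all add: assms(1))
  hence "(cmod (\<alpha> i))\<^sup>2 \<le> 1\<^sup>2"
    using assms(2) by simp
  thus ?thesis
    by (rule power2_le_imp_le) simp
qed

section \<open>The sequence space \<open>\<ell>\<^sup>2\<close> as a type\<close>

lemma ell2_iff: "x \<in> ell2 \<longleftrightarrow> summable (\<lambda>k. (cmod (x k))\<^sup>2)"
  by (simp add: ell2_def)

lemma ell2_zero: "(0 :: nat \<Rightarrow> complex) \<in> ell2"
  by (simp add: ell2_iff)

lemma ell2_add:
  assumes "x \<in> ell2" "y \<in> ell2"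
  shows "x + y \<in> ell2"
  unfolding ell2_iff
proof (rule summable_comparison_test')
  show "summable (\<lambda>k. 2 * (cmod (x k))\<^sup>2 + 2 * (cmod (y k))\<^sup>2)"
    using assms unfolding ell2_iff by (intro summable_add summable_mult)
  fix k
  have "(cmod (x k + y k))\<^sup>2 \<le> (cmod (x k) + cmod (y k))\<^sup>2"
    by (simp add: norm_triangle_ineq power_mono)
  also have "\<dots> \<le> 2 * (cmod (x k))\<^sup>2 + 2 * (cmod (y k))\<^sup>2"
    using sum_squares_bound[of "cmod (x k)" "cmod (y k)"] by (simp add: power2_sum)
  finally show "norm ((cmod ((x + y) k))\<^sup>2) \<le> 2 * (cmod (x k))\<^sup>2 + 2 * (cmod (y k))\<^sup>2"
    by simp
qed

lemma ell2_scale: "x \<in> ell2 \<Longrightarrow> (\<lambda>k. c * x k) \<in> ell2"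
  unfolding ell2_iff norm_mult power_mult_distrib by (rule summable_mult)

lemma ell2_uminus: "x \<in> ell2 \<Longrightarrow> - x \<in> ell2"
  by (simp add: ell2_iff)

lemma ell2_diff: "x \<in> ell2 \<Longrightarrow> y \<in> ell2 \<Longrightarrow> x - y \<in> ell2"
  using ell2_add[of x "- y"] ell2_uminus[of y] by simp

lemma ell2_sum: "(\<And>n. n \<in> F \<Longrightarrow> x n \<in> ell2) \<Longrightarrow> (\<Sum>n\<in>F. x n) \<in> ell2"
  by (induction F rule: infinite_finite_induct) (simp_all add: ell2_zero ell2_add)

lemma summable_l2inner:
  assumes "x \<in> ell2" "y \<in> ell2"
  shows "summable (\<lambda>k. x k * cnj (y k))"
proof (rule summable_norm_cancel, rule summable_comparison_test')
  show "summable (\<lambda>k. (cmod (x k))\<^sup>2 + (cmod (y k))\<^sup>2)"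
    using assms unfolding ell2_iff by (rule summable_add)
  fix k
  have "norm (norm (x k * cnj (y k))) = cmod (x k) * cmod (y k)"
    by (simp add: norm_mult)
  moreover have "0 \<le> cmod (x k) * cmod (y k)"
    by simp
  ultimately show "norm (norm (x k * cnj (y k))) \<le> (cmod (x k))\<^sup>2 + (cmod (y k))\<^sup>2"
    using sum_squares_bound[of "cmod (x k)" "cmod (y k)"] by linarith
qed

lemma l2inner_add_left:
  "x \<in> ell2 \<Longrightarrow> y \<in> ell2 \<Longrightarrow> z \<in> ell2 \<Longrightarrow> l2inner (x + y) z = l2inner x z + l2inner y z"
  unfolding l2inner_def by (simp add: distrib_right suminf_add[OF summable_l2inner summable_l2inner])

lemma l2inner_scale_left:
  "x \<in> ell2 \<Longrightarrow> y \<in> ell2 \<Longrightarrow> l2inner (\<lambda>k. c * x k) y = c * l2inner x y"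
  unfolding l2inner_def by (simp add: mult.assoc suminf_mult[OF summable_l2inner])

lemma l2inner_commute:
  assumes "x \<in> ell2" "y \<in> ell2"
  shows "l2inner y x = cnj (l2inner x y)"
proof -
  have "(\<lambda>k. cnj (x k * cnj (y k))) sums cnj (\<Sum>k. x k * cnj (y k))"
    by (rule sums_cnj[THEN iffD2, OF summable_sums[OF summable_l2inner[OF assms]]])
  thus ?thesis unfolding l2inner_def by (simp add: sums_unique[symmetric] mult.commute)
qed

lemma l2inner_self:
  assumes "x \<in> ell2"
  shows "l2inner x x = of_real (\<Sum>k. (cmod (x k))\<^sup>2)"
proof -
  have "(\<lambda>k. x k * cnj (x k)) = (\<lambda>k. of_real ((cmod (x k))\<^sup>2))"
    by (rule ext) (rule complex_norm_square[symmetric])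
  thus ?thesis using assms unfolding l2inner_def ell2_iff by (simp add: suminf_of_real)
qed

typedef l2 = ell2 morphisms coords mk_l2
  using ell2_zero by blast

setup_lifting type_definition_l2

instantiation l2 :: real_vector
begin
lift_definition zero_l2 :: l2 is 0 by (rule ell2_zero)
lift_definition plus_l2 :: "l2 \<Rightarrow> l2 \<Rightarrow> l2" is "(+)" by (rule ell2_add)
lift_definition uminus_l2 :: "l2 \<Rightarrow> l2" is uminus by (rule ell2_uminus)
lift_definition minus_l2 :: "l2 \<Rightarrow> l2 \<Rightarrow> l2" is "(-)" by (rule ell2_diff)
lift_definition scaleR_l2 :: "real \<Rightarrow> l2 \<Rightarrow> l2" is "\<lambda>r x k. of_real r * x k"
  by (rule ell2_scale)
instance
  by standard (transfer; auto simp: fun_eq_iff algebra_simps)+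
end

definition cinner :: "l2 \<Rightarrow> l2 \<Rightarrow> complex" where
  "cinner x y = l2inner (coords x) (coords y)"

lift_definition cscale :: "complex \<Rightarrow> l2 \<Rightarrow> l2" is "\<lambda>c x k. c * x k"
  by (rule ell2_scale)

instantiation l2 :: real_inner
begin
definition norm_l2 :: "l2 \<Rightarrow> real" where "norm_l2 x = l2norm (coords x)"
definition sgn_l2 :: "l2 \<Rightarrow> l2" where "sgn_l2 x = x /\<^sub>R norm x"
definition dist_l2 :: "l2 \<Rightarrow> l2 \<Rightarrow> real" where "dist_l2 x y = norm (x - y)"
definition uniformity_l2 :: "(l2 \<times> l2) filter" where
  "uniformity_l2 = (INF e\<in>{0<..}. principal {(x, y). dist x y < e})"
definition open_l2 :: "l2 set \<Rightarrow> bool" where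
  "open_l2 U = (\<forall>x\<in>U. \<forall>\<^sub>F (x', y) in uniformity. x' = x \<longrightarrow> y \<in> U)"
definition inner_l2 :: "l2 \<Rightarrow> l2 \<Rightarrow> real" where "inner_l2 x y = Re (cinner x y)"
instance
proof
  fix x y z :: l2 and r :: real
  show "dist x y = norm (x - y)" by (simp add: dist_l2_def)
  show "sgn x = x /\<^sub>R norm x" by (simp add: sgn_l2_def)
  show "(uniformity :: (l2 \<times> l2) filter) = (INF e\<in>{0<..}. principal {(x, y). dist x y < e})"
    by (simp add: uniformity_l2_def)
  show "open U = (\<forall>x\<in>U. \<forall>\<^sub>F (x', y) in uniformity. x' = x \<longrightarrow> y \<in> U)" for U :: "l2 set"
    by (simp add: open_l2_def)
  show "inner x y = inner y x"
    unfolding inner_l2_def cinner_def using l2inner_commute[OF coords[of x] coords[of y]] by simp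
  show "inner (x + y) z = inner x z + inner y z"
    unfolding inner_l2_def cinner_def plus_l2.rep_eq by (simp add: l2inner_add_left coords)
  show "inner (r *\<^sub>R x) y = r * inner x y"
    unfolding inner_l2_def cinner_def scaleR_l2.rep_eq by (simp add: l2inner_scale_left coords)
  have summable: "summable (\<lambda>k. (cmod (coords x k))\<^sup>2)"
    using coords[of x] by (simp add: ell2_iff)
  have inner_self: "inner x x = (\<Sum>k. (cmod (coords x k))\<^sup>2)"
    unfolding inner_l2_def cinner_def using l2inner_self[OF coords[of x]] by simp
  show "0 \<le> inner x x"
    unfolding inner_self by (simp add: suminf_nonneg summable)
  have "inner x x = 0 \<longleftrightarrow> (\<forall>k. (cmod (coords x k))\<^sup>2 = 0)"
    unfolding inner_self by (rule suminf_eq_zero_iff[OF summable]) simp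
  also have "\<dots> \<longleftrightarrow> coords x = coords 0"
    by (simp add: fun_eq_iff zero_l2.rep_eq)
  also have "\<dots> \<longleftrightarrow> x = 0"
    by (rule coords_inject)
  finally show "inner x x = 0 \<longleftrightarrow> x = 0" .
  show "norm x = sqrt (inner x x)"
    unfolding inner_self norm_l2_def l2norm_def by (rule refl)
qed
end

lemmas coords_plus = plus_l2.rep_eq
  and coords_minus = minus_l2.rep_eq
  and coords_zero = zero_l2.rep_eq
  and coords_cscale = cscale.rep_eq

lemma norm_coords: "l2norm (coords x) = norm x"
  by (simp add: norm_l2_def)

lemma l2norm_mk_l2: "f \<in> ell2 \<Longrightarrow> l2norm f = norm (mk_l2 f)"
  by (simp add: norm_l2_def mk_l2_inverse)

lemma l2norm_nonneg: "f \<in> ell2 \<Longrightarrow> 0 \<le> l2norm f"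
  by (simp add: l2norm_mk_l2)

lemma mk_l2_add: "f \<in> ell2 \<Longrightarrow> g \<in> ell2 \<Longrightarrow> mk_l2 (f + g) = mk_l2 f + mk_l2 g"
  by (simp add: coords_inject[symmetric] coords_plus mk_l2_inverse ell2_add)

lemma mk_l2_diff: "f \<in> ell2 \<Longrightarrow> g \<in> ell2 \<Longrightarrow> mk_l2 (f - g) = mk_l2 f - mk_l2 g"
  by (simp add: coords_inject[symmetric] coords_minus mk_l2_inverse ell2_diff)

lemma mk_l2_zero: "mk_l2 0 = 0"
  by (simp add: coords_inject[symmetric] coords_zero mk_l2_inverse ell2_zero)

lemma mk_l2_sum: "(\<And>n. n \<in> F \<Longrightarrow> f n \<in> ell2) \<Longrightarrow> mk_l2 (\<Sum>n\<in>F. f n) = (\<Sum>n\<in>F. mk_l2 (f n))"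
  by (induction F rule: infinite_finite_induct) (simp_all add: mk_l2_zero mk_l2_add ell2_sum)

lemma mk_l2_scale: "f \<in> ell2 \<Longrightarrow> mk_l2 (scaleC_vec c f) = cscale c (mk_l2 f)"
  by (simp add: coords_inject[symmetric] coords_cscale mk_l2_inverse ell2_scale scaleC_vec_def)

lemma coords_sum: "coords (sum f F) = (\<Sum>n\<in>F. coords (f n))"
  by (induction F rule: infinite_finite_induct) (simp_all add: coords_zero coords_plus)

lemma cscale_add_right: "cscale c (x + y) = cscale c x + cscale c y"
  by transfer (simp add: fun_eq_iff distrib_left)

lemma cscale_add_left: "cscale (a + b) x = cscale a x + cscale b x"
  by transfer (simp add: fun_eq_iff distrib_right)

lemma cscale_cscale: "cscale a (cscale b x) = cscale (a * b) x"
  by transfer (simp add: fun_eq_iff mult.assoc)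

lemma cscale_one: "cscale 1 x = x"
  by transfer simp

lemma cscale_zero_left: "cscale 0 x = 0"
  by transfer (simp add: fun_eq_iff)

lemma cscale_diff_right: "cscale c (x - y) = cscale c x - cscale c y"
  by transfer (simp add: fun_eq_iff right_diff_distrib)

lemma cscale_of_real: "cscale (of_real r) x = r *\<^sub>R x"
  by transfer simp

lemma cscale_zero_right: "cscale c 0 = 0"
  by transfer (simp add: fun_eq_iff)

lemma cscale_sum_right: "cscale c (sum f I) = (\<Sum>i\<in>I. cscale c (f i))"
  by (induction I rule: infinite_finite_induct) (simp_all add: cscale_add_right cscale_zero_right)

lemma cinner_add_left: "cinner (x + y) z = cinner x z + cinner y z"
  unfolding cinner_def coords_plus by (rule l2inner_add_left) (simp_all add: coords)

lemma cinner_cscale_left: "cinner (cscale c x) y = c * cinner x y"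
  unfolding cinner_def coords_cscale by (rule l2inner_scale_left) (simp_all add: coords)

lemma cinner_commute: "cinner y x = cnj (cinner x y)"
  unfolding cinner_def by (rule l2inner_commute) (simp_all add: coords)

lemma cinner_add_right: "cinner x (y + z) = cinner x y + cinner x z"
  by (subst cinner_commute, subst cinner_add_left) (simp add: cinner_commute[of x])

lemma cinner_cscale_right: "cinner x (cscale c y) = cnj c * cinner x y"
  by (subst cinner_commute, subst cinner_cscale_left) (simp add: cinner_commute[of x])

lemma cinner_zero_left [simp]: "cinner 0 y = 0"
  using cinner_add_left[of 0 0 y] by simp

lemma cinner_zero_right [simp]: "cinner x 0 = 0"
  using cinner_add_right[of x 0 0] by simp

lemma cinner_diff_left: "cinner (x - y) z = cinner x z - cinner y z"
  using cinner_add_left[of "x - y" y z] by (simp add: algebra_simps)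

lemma cinner_sum_left: "cinner (sum f I) y = (\<Sum>i\<in>I. cinner (f i) y)"
  by (induction I rule: infinite_finite_induct) (simp_all add: cinner_add_left)

lemma cinner_sum_right: "cinner y (sum f I) = (\<Sum>i\<in>I. cinner y (f i))"
  by (induction I rule: infinite_finite_induct) (simp_all add: cinner_add_right)

lemma inner_cinner: "inner x y = Re (cinner x y)"
  by (simp add: inner_l2_def)

lemma norm_sq_eq_suminf: "(norm x)\<^sup>2 = (\<Sum>k. (cmod (coords x k))\<^sup>2)"
  using coords[of x] unfolding norm_l2_def l2norm_def ell2_iff by (simp add: suminf_nonneg)

lemma cinner_self: "cinner x x = of_real ((norm x)\<^sup>2)"
  unfolding cinner_def norm_sq_eq_suminf by (rule l2inner_self) (rule coords)

lemma norm_cscale: "norm (cscale c x) = cmod c * norm x"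
proof -
  have "of_real ((norm (cscale c x))\<^sup>2) = c * cnj c * cinner x x"
    by (simp only: cinner_self[symmetric] cinner_cscale_left cinner_cscale_right
        mult.assoc mult.left_commute)
  also have "\<dots> = of_real ((cmod c * norm x)\<^sup>2)"
    by (simp add: cinner_self complex_norm_square[symmetric] power_mult_distrib)
  finally have "(norm (cscale c x))\<^sup>2 = (cmod c * norm x)\<^sup>2"
    using of_real_eq_iff by blast
  thus ?thesis by (rule power2_eq_imp_eq) simp_all
qed

lemma norm_cinner_le: "cmod (cinner x y) \<le> norm x * norm y"
proof (cases "cinner x y = 0")
  case False
  define u where "u = cnj (cinner x y) / of_real (cmod (cinner x y))"
  \<comment> \<open>rotating \<open>x\<close> by the unit \<open>u\<close> makes the complex inner product real and nonnegative\<close>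
  have "u * cinner x y = of_real (cmod (cinner x y))"
    using False unfolding u_def
    by (simp add: complex_norm_square[symmetric] power2_eq_square field_simps)
  hence "cmod (cinner x y) = inner (cscale u x) y"
    by (simp add: inner_cinner cinner_cscale_left)
  also have "\<dots> \<le> norm (cscale u x) * norm y"
    by (rule norm_cauchy_schwarz)
  also have "\<dots> = norm x * norm y"
    using False by (simp add: norm_cscale u_def norm_divide)
  finally show ?thesis .
qed simp

lemma bounded_linear_cscale: "bounded_linear (cscale c)"
proof (rule bounded_linear_intro[where K = "cmod c"])
  show "cscale c (x + y) = cscale c x + cscale c y" for x y
    by (rule cscale_add_right)
  show "cscale c (r *\<^sub>R x) = r *\<^sub>R cscale c x" for r x
    by (simp add: cscale_of_real[symmetric] cscale_cscale mult.commute)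
  show "norm (cscale c x) \<le> norm x * cmod c" for x
    by (simp add: norm_cscale mult.commute)
qed

lemma bounded_linear_cinner_left: "bounded_linear (\<lambda>x. cinner x y)"
proof (rule bounded_linear_intro[where K = "norm y"])
  show "cinner (x + z) y = cinner x y + cinner z y" for x z
    by (rule cinner_add_left)
  show "cinner (r *\<^sub>R x) y = r *\<^sub>R cinner x y" for r x
    by (simp add: cscale_of_real[symmetric] cinner_cscale_left scaleR_conv_of_real)
  show "norm (cinner x y) \<le> norm x * norm y" for x
    by (rule norm_cinner_le)
qed

lemma sum_sq_coords_le: "finite A \<Longrightarrow> (\<Sum>k\<in>A. (cmod (coords x k))\<^sup>2) \<le> (norm x)\<^sup>2"
  unfolding norm_sq_eq_suminf using coords[of x] unfolding ell2_iff by (rule sum_le_suminf) simp_all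

lemma coordinate_le_norm: "cmod (coords x k) \<le> norm x"
proof (rule power2_le_imp_le)
  show "(cmod (coords x k))\<^sup>2 \<le> (norm x)\<^sup>2"
    using sum_sq_coords_le[of "{k}" x] by simp
qed simp

lemma Cauchy_coords: "Cauchy X \<Longrightarrow> Cauchy (\<lambda>n. coords (X n) k)"
proof (rule CauchyI)
  fix e :: real
  assume "Cauchy X" "0 < e"
  then obtain M where "\<forall>m\<ge>M. \<forall>n\<ge>M. norm (X m - X n) < e"
    by (meson CauchyD)
  hence "norm (coords (X m) k - coords (X n) k) < e" if "m \<ge> M" "n \<ge> M" for m n
    using coordinate_le_norm[of "X m - X n" k] that coords_minus[of "X m" "X n"]
    by (metis order.strict_trans1 minus_apply)
  thus "\<exists>M. \<forall>m\<ge>M. \<forall>n\<ge>M. norm (coords (X m) k - coords (X n) k) < e"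
    by blast
qed

lemma Cauchy_coords_limit_bound:
  assumes X: "Cauchy X" and z: "\<And>k. (\<lambda>n. coords (X n) k) \<longlonglongrightarrow> z k" and e: "e > 0"
  shows "\<exists>N. \<forall>n\<ge>N. \<forall>K. (\<Sum>k<K. (cmod (coords (X n) k - z k))\<^sup>2) \<le> e\<^sup>2"
proof -
  from CauchyD[OF X e] obtain N where N: "\<forall>m\<ge>N. \<forall>n\<ge>N. norm (X m - X n) < e"
    by blast
  have "(\<Sum>k<K. (cmod (coords (X n) k - z k))\<^sup>2) \<le> e\<^sup>2" if n: "n \<ge> N" for n K
  proof (rule tendsto_upperbound)
    show "(\<lambda>m. \<Sum>k<K. (cmod (coords (X n) k - coords (X m) k))\<^sup>2)
        \<longlonglongrightarrow> (\<Sum>k<K. (cmod (coords (X n) k - z k))\<^sup>2)"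
      by (intro tendsto_intros z)
    show "\<forall>\<^sub>F m in sequentially. (\<Sum>k<K. (cmod (coords (X n) k - coords (X m) k))\<^sup>2) \<le> e\<^sup>2"
      using eventually_ge_at_top[of N]
    proof eventually_elim
      case (elim m)
      have "(\<Sum>k<K. (cmod (coords (X n - X m) k))\<^sup>2) \<le> (norm (X n - X m))\<^sup>2"
        by (rule sum_sq_coords_le) simp
      also have "\<dots> \<le> e\<^sup>2"
        using N n elim by (intro power_mono) (simp_all add: less_imp_le)
      finally show ?case
        by (simp add: coords_minus)
    qed
  qed simp
  thus ?thesis
    by blast
qed

instance l2 :: complete_space
proof
  fix X :: "nat \<Rightarrow> l2"
  assume X: "Cauchy X"
  obtain z where z: "\<And>k. (\<lambda>n. coords (X n) k) \<longlonglongrightarrow> z k"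
    using Cauchy_coords[OF X] unfolding Cauchy_convergent_iff convergent_def by metis
  note tail = Cauchy_coords_limit_bound[OF X z]
  obtain N1 where N1: "\<forall>n\<ge>N1. \<forall>K. (\<Sum>k<K. (cmod (coords (X n) k - z k))\<^sup>2) \<le> 1"
    using tail[of 1] by auto
  have "summable (\<lambda>k. (cmod (coords (X N1) k - z k))\<^sup>2)"
    by (rule summableI_nonneg_bounded[where x = 1]) (use N1 in auto)
  hence "coords (X N1) - z \<in> ell2"
    by (simp add: ell2_iff)
  hence z_ell2: "z \<in> ell2"
    using ell2_diff[OF coords[of "X N1"]] by fastforce
  have "X \<longlonglongrightarrow> mk_l2 z"
  proof (rule LIMSEQ_I)
    fix r :: real
    assume r: "0 < r"
    obtain N where N: "\<forall>n\<ge>N. \<forall>K. (\<Sum>k<K. (cmod (coords (X n) k - z k))\<^sup>2) \<le> (r/2)\<^sup>2"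
      using tail[of "r/2"] r by auto
    have "norm (X n - mk_l2 z) < r" if "n \<ge> N" for n
    proof -
      have v: "coords (X n - mk_l2 z) = coords (X n) - z"
        by (simp add: coords_minus mk_l2_inverse z_ell2)
      have "(norm (X n - mk_l2 z))\<^sup>2 \<le> (r/2)\<^sup>2"
        using coords[of "X n - mk_l2 z"] N that unfolding norm_sq_eq_suminf v ell2_iff
        by (intro suminf_le_const) auto
      hence "norm (X n - mk_l2 z) \<le> r/2"
        by (rule power2_le_imp_le) (use r in simp)
      thus ?thesis
        using r by simp
    qed
    thus "\<exists>no. \<forall>n\<ge>no. norm (X n - mk_l2 z) < r"
      by blast
  qed
  thus "convergent X"
    by (rule convergentI)
qed

locale orthonormal_basis =
  fixes E :: "nat \<Rightarrow> l2"
  assumes orthonormal: "\<And>m n. cinner (E m) (E n) = (if m = n then 1 else 0)"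
    and complete: "\<And>x. (\<And>n. cinner x (E n) = 0) \<Longrightarrow> x = 0"
begin

definition lincomb :: "nat set \<Rightarrow> (nat \<Rightarrow> complex) \<Rightarrow> l2" where
  "lincomb I \<alpha> = (\<Sum>i\<in>I. cscale (\<alpha> i) (E i))"

definition proj_span :: "nat set \<Rightarrow> l2 \<Rightarrow> l2" where
  "proj_span I x = lincomb I (\<lambda>i. cinner x (E i))"

lemma norm_basis: "norm (E n) = 1"
proof -
  have "of_real ((norm (E n))\<^sup>2) = (1 :: complex)"
    using orthonormal[of n n] by (simp add: cinner_self)
  hence "(norm (E n))\<^sup>2 = 1"
    by (metis of_real_1 of_real_eq_iff)
  thus ?thesis
    using norm_ge_zero[of "E n"] by (auto simp: power2_eq_1_iff)
qed

lemma cinner_lincomb_basis: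
  "finite I \<Longrightarrow> cinner (lincomb I \<alpha>) (E j) = (if j \<in> I then \<alpha> j else 0)"
proof -
  assume "finite I"
  have "cinner (lincomb I \<alpha>) (E j) = (\<Sum>i\<in>I. if i = j then \<alpha> j else 0)"
    unfolding lincomb_def cinner_sum_left cinner_cscale_left orthonormal
    by (rule sum.cong) simp_all
  also have "\<dots> = (if j \<in> I then \<alpha> j else 0)"
    using \<open>finite I\<close> by (rule sum.delta)
  finally show ?thesis .
qed

lemma cinner_lincomb_lincomb:
  "finite I \<Longrightarrow> cinner (lincomb I \<alpha>) (lincomb I \<beta>) = (\<Sum>i\<in>I. \<alpha> i * cnj (\<beta> i))"
  by (simp add: lincomb_def[of I \<alpha>] cinner_sum_left cinner_cscale_left
      cinner_commute[of "E _"] cinner_lincomb_basis)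

lemma norm_lincomb_sq:
  assumes "finite I"
  shows "(norm (lincomb I \<alpha>))\<^sup>2 = (\<Sum>i\<in>I. (cmod (\<alpha> i))\<^sup>2)"
proof -
  have "of_real ((norm (lincomb I \<alpha>))\<^sup>2) = (\<Sum>i\<in>I. \<alpha> i * cnj (\<alpha> i))"
    by (simp only: cinner_self[symmetric] cinner_lincomb_lincomb[OF assms])
  also have "\<dots> = of_real (\<Sum>i\<in>I. (cmod (\<alpha> i))\<^sup>2)"
    by (simp only: complex_norm_square of_real_sum)
  finally show ?thesis
    by (simp only: of_real_eq_iff)
qed

lemma norm_lincomb: "finite I \<Longrightarrow> norm (lincomb I \<alpha>) = sqrt (\<Sum>i\<in>I. (cmod (\<alpha> i))\<^sup>2)"
  using norm_lincomb_sq[of I \<alpha>] by (metis norm_ge_zero real_sqrt_unique)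

lemma norm_lincomb_le_1:
  "finite I \<Longrightarrow> (\<Sum>i\<in>I. (cmod (\<alpha> i))\<^sup>2) \<le> 1 \<Longrightarrow> norm (lincomb I \<alpha>) \<le> 1"
  by (simp add: norm_lincomb)

lemma norm_lincomb_le_sum: "norm (lincomb I \<gamma>) \<le> (\<Sum>i\<in>I. cmod (\<gamma> i))"
  unfolding lincomb_def using norm_sum[of "\<lambda>i. cscale (\<gamma> i) (E i)" I]
  by (simp add: norm_cscale norm_basis)

lemma lincomb_diff: "finite A \<Longrightarrow> B \<subseteq> A \<Longrightarrow> lincomb A \<alpha> - lincomb B \<alpha> = lincomb (A - B) \<alpha>"
  unfolding lincomb_def by (simp add: sum_diff)

lemma lincomb_add_coeffs: "lincomb I (\<lambda>i. \<alpha> i + \<beta> i) = lincomb I \<alpha> + lincomb I \<beta>"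
  unfolding lincomb_def by (simp add: cscale_add_left sum.distrib)

lemma lincomb_scale_coeffs: "lincomb I (\<lambda>i. c * \<alpha> i) = cscale c (lincomb I \<alpha>)"
  unfolding lincomb_def by (simp add: cscale_sum_right cscale_cscale)

lemma norm_coeff_le: "cmod (cinner x (E i)) \<le> norm x"
  using norm_cinner_le[of x "E i"] by (simp add: norm_basis)

lemma pythagoras_proj_span:
  assumes "finite I"
  shows "(norm x)\<^sup>2 = (norm (x - proj_span I x))\<^sup>2 + (norm (proj_span I x))\<^sup>2"
proof -
  have "cinner (x - proj_span I x) (E j) = 0" if "j \<in> I" for j
    using assms that by (simp add: proj_span_def cinner_diff_left cinner_lincomb_basis)
  hence "cinner (x - proj_span I x) (proj_span I x) = 0"
    unfolding proj_span_def[of I x] lincomb_def cinner_sum_right cinner_cscale_right by simp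
  hence "orthogonal (x - proj_span I x) (proj_span I x)"
    unfolding orthogonal_def inner_cinner by simp
  from norm_add_Pythagorean[OF this] show ?thesis by simp
qed

lemma bessel_inequality: "finite I \<Longrightarrow> (\<Sum>i\<in>I. (cmod (cinner x (E i)))\<^sup>2) \<le> (norm x)\<^sup>2"
  using pythagoras_proj_span[of I x] norm_lincomb_sq[of I "\<lambda>i. cinner x (E i)"]
  by (simp add: proj_span_def)

lemma summable_coeffs: "summable (\<lambda>i. (cmod (cinner x (E i)))\<^sup>2)"
  by (rule summableI_nonneg_bounded[where x = "(norm x)\<^sup>2"]) (simp_all add: bessel_inequality)

lemma norm_lincomb_diff_le_tail:
  assumes "summable (\<lambda>i. (cmod (\<beta> i))\<^sup>2)" "finite G" "{..<K} \<subseteq> F" "F \<subseteq> G"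
  shows "(norm (lincomb G \<beta> - lincomb F \<beta>))\<^sup>2 \<le> (\<Sum>i. (cmod (\<beta> (i + K)))\<^sup>2)"
proof -
  have "finite F"
    using assms(2,4) by (rule finite_subset[rotated])
  hence "(norm (lincomb G \<beta> - lincomb F \<beta>))\<^sup>2 = (\<Sum>i\<in>G - F. (cmod (\<beta> i))\<^sup>2)"
    using assms by (simp add: lincomb_diff norm_lincomb_sq)
  also have "\<dots> \<le> (\<Sum>i. (cmod (\<beta> (i + K)))\<^sup>2)"
  proof (rule sum_le_suminf_shift)
    show "G - F \<subseteq> {K..}"
    proof
      fix i
      assume "i \<in> G - F"
      hence "i \<notin> {..<K}"
        using assms(3) by blast
      thus "i \<in> {K..}"
        by simp
    qed
  qed (use assms(1,2) in simp_all)
  finally show ?thesis .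
qed

lemma lincomb_convergent:
  assumes \<beta>: "summable (\<lambda>i. (cmod (\<beta> i))\<^sup>2)"
  shows "convergent (\<lambda>K. lincomb {..<K} \<beta>)"
proof -
  have tail: "(\<lambda>N. \<Sum>i. (cmod (\<beta> (i + N)))\<^sup>2) \<longlonglongrightarrow> 0"
    by (rule suminf_shift_tendsto_zero[OF \<beta>])
  have "Cauchy (\<lambda>K. lincomb {..<K} \<beta>)"
  proof (rule CauchyI)
    fix e :: real
    assume e: "0 < e"
    have "\<forall>\<^sub>F N in sequentially. (\<Sum>i. (cmod (\<beta> (i + N)))\<^sup>2) < e\<^sup>2"
      using order_tendstoD(2)[OF tail, of "e\<^sup>2"] e by simp
    then obtain N where N: "\<forall>n\<ge>N. (\<Sum>i. (cmod (\<beta> (i + n)))\<^sup>2) < e\<^sup>2"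
      unfolding eventually_sequentially by blast
    have le: "norm (lincomb {..<m} \<beta> - lincomb {..<n} \<beta>) < e" if "N \<le> n" "n \<le> m" for m n
    proof (rule power2_less_imp_less)
      have "(norm (lincomb {..<m} \<beta> - lincomb {..<n} \<beta>))\<^sup>2 \<le> (\<Sum>i. (cmod (\<beta> (i + n)))\<^sup>2)"
        by (rule norm_lincomb_diff_le_tail[OF \<beta>]) (use that in auto)
      also have "\<dots> < e\<^sup>2"
        using N that by simp
      finally show "(norm (lincomb {..<m} \<beta> - lincomb {..<n} \<beta>))\<^sup>2 < e\<^sup>2" .
    qed (use e in simp)
    have "norm (lincomb {..<m} \<beta> - lincomb {..<n} \<beta>) < e" if "m \<ge> N" "n \<ge> N" for m n
    proof (cases "n \<le> m")
      case True
      thus ?thesis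
        using le[of n m] that by simp
    next
      case False
      thus ?thesis
        using le[of m n] that norm_minus_commute[of "lincomb {..<m} \<beta>" "lincomb {..<n} \<beta>"] by simp
    qed
    thus "\<exists>M. \<forall>m\<ge>M. \<forall>n\<ge>M. norm (lincomb {..<m} \<beta> - lincomb {..<n} \<beta>) < e"
      by blast
  qed
  thus ?thesis
    by (simp add: Cauchy_convergent_iff)
qed

lemma cinner_lim_lincomb:
  assumes "(\<lambda>K. lincomb {..<K} \<beta>) \<longlonglongrightarrow> z"
  shows "cinner z (E j) = \<beta> j"
proof (rule LIMSEQ_unique)
  show "(\<lambda>K. cinner (lincomb {..<K} \<beta>) (E j)) \<longlonglongrightarrow> cinner z (E j)"
    by (rule bounded_linear.tendsto[OF bounded_linear_cinner_left assms])
  have "\<forall>\<^sub>F K in sequentially. cinner (lincomb {..<K} \<beta>) (E j) = \<beta> j"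
    using eventually_gt_at_top[of j] by eventually_elim (simp add: cinner_lincomb_basis)
  thus "(\<lambda>K. cinner (lincomb {..<K} \<beta>) (E j)) \<longlonglongrightarrow> \<beta> j"
    by (rule tendsto_eventually)
qed

lemma lincomb_tendsto_unconditionally:
  assumes \<beta>: "summable (\<lambda>i. (cmod (\<beta> i))\<^sup>2)" and z: "(\<lambda>K. lincomb {..<K} \<beta>) \<longlonglongrightarrow> z"
    and r: "r > 0"
  shows "\<exists>K. \<forall>F. finite F \<and> {..<K} \<subseteq> F \<longrightarrow> norm (z - lincomb F \<beta>) < r"
proof -
  have "\<forall>\<^sub>F N in sequentially. (\<Sum>i. (cmod (\<beta> (i + N)))\<^sup>2) < (r/2)\<^sup>2"
    using order_tendstoD(2)[OF suminf_shift_tendsto_zero[OF \<beta>], of "(r/2)\<^sup>2"] r by simp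
  then obtain K where K: "(\<Sum>i. (cmod (\<beta> (i + K)))\<^sup>2) < (r/2)\<^sup>2"
    unfolding eventually_sequentially by blast
  have bound: "norm (z - lincomb F \<beta>) \<le> r/2" if F: "finite F" "{..<K} \<subseteq> F" for F
  proof (rule tendsto_upperbound)
    show "(\<lambda>K'. norm (lincomb {..<K'} \<beta> - lincomb F \<beta>)) \<longlonglongrightarrow> norm (z - lincomb F \<beta>)"
      by (intro tendsto_intros z)
    show "\<forall>\<^sub>F K' in sequentially. norm (lincomb {..<K'} \<beta> - lincomb F \<beta>) \<le> r/2"
      using eventually_gt_at_top[of "Max (insert 0 F)"]
    proof eventually_elim
      case (elim K')
      have "F \<subseteq> {..<K'}"
      proof
        fix i
        assume "i \<in> F"
        hence "i \<le> Max (insert 0 F)"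
          using F(1) by simp
        thus "i \<in> {..<K'}"
          using elim by simp
      qed
      hence "(norm (lincomb {..<K'} \<beta> - lincomb F \<beta>))\<^sup>2 \<le> (\<Sum>i. (cmod (\<beta> (i + K)))\<^sup>2)"
        by (intro norm_lincomb_diff_le_tail[OF \<beta>]) (use F in auto)
      also have "\<dots> \<le> (r/2)\<^sup>2"
        using K by simp
      finally show ?case
        by (rule power2_le_imp_le) (use r in simp)
    qed
  qed simp
  have "norm (z - lincomb F \<beta>) < r" if "finite F" "{..<K} \<subseteq> F" for F
    using bound[OF that] r by linarith
  thus ?thesis
    by blast
qed

lemma parseval: "(\<lambda>K. proj_span {..<K} x) \<longlonglongrightarrow> x"
proof -
  obtain z where z: "(\<lambda>K. lincomb {..<K} (\<lambda>i. cinner x (E i))) \<longlonglongrightarrow> z"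
    using lincomb_convergent[OF summable_coeffs[of x]] unfolding convergent_def by blast
  have "x - z = 0"
    by (rule complete) (simp add: cinner_diff_left cinner_lim_lincomb[OF z])
  thus ?thesis
    using z by (simp add: proj_span_def)
qed

end

definition l2_op :: "((nat \<Rightarrow> complex) \<Rightarrow> (nat \<Rightarrow> complex)) \<Rightarrow> l2 \<Rightarrow> l2" where
  "l2_op T x = mk_l2 (T (coords x))"

definition bounded_clinear :: "(l2 \<Rightarrow> l2) \<Rightarrow> bool" where
  "bounded_clinear A \<longleftrightarrow> (\<forall>x y. A (x + y) = A x + A y) \<and> (\<forall>c x. A (cscale c x) = cscale c (A x)) \<and>
     (\<exists>K. \<forall>x. norm (A x) \<le> K * norm x)"

lemma bounded_op_ell2: "bounded_op T \<Longrightarrow> f \<in> ell2 \<Longrightarrow> T f \<in> ell2"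
  by (simp add: bounded_op_def)

lemma coords_l2_op: "bounded_op T \<Longrightarrow> coords (l2_op T x) = T (coords x)"
  by (simp add: l2_op_def mk_l2_inverse bounded_op_ell2 coords)

lemma norm_l2_op: "bounded_op T \<Longrightarrow> norm (l2_op T x) = l2norm (T (coords x))"
  by (simp add: norm_coords[symmetric] coords_l2_op)

lemma bounded_clinear_cscale: "bounded_clinear A \<Longrightarrow> A (cscale c x) = cscale c (A x)"
  by (simp add: bounded_clinear_def)

lemma bounded_clinear_imp_bounded_linear:
  assumes "bounded_clinear A"
  shows "bounded_linear A"
proof -
  obtain K where K: "\<And>x. norm (A x) \<le> K * norm x"
    using assms by (auto simp: bounded_clinear_def)
  show ?thesis
  proof (rule bounded_linear_intro[where K = K])
    show "A (x + y) = A x + A y" for x y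
      using assms by (simp add: bounded_clinear_def)
    show "A (r *\<^sub>R x) = r *\<^sub>R A x" for r x
      using bounded_clinear_cscale[OF assms, of "of_real r" x] by (simp add: cscale_of_real)
    show "norm (A x) \<le> norm x * K" for x
      using K[of x] by (simp add: mult.commute)
  qed
qed

lemma bounded_clinear_l2_op:
  assumes T: "bounded_op T"
  shows "bounded_clinear (l2_op T)"
proof -
  obtain K where K: "\<forall>f\<in>ell2. l2norm (T f) \<le> K * l2norm f"
    using T by (auto simp: bounded_op_def)
  have "l2_op T (x + y) = l2_op T x + l2_op T y" for x y
    using T coords[of x] coords[of y]
    by (simp add: l2_op_def coords_plus bounded_op_def mk_l2_add bounded_op_ell2[OF T] coords)
  moreover have "l2_op T (cscale c x) = cscale c (l2_op T x)" for c x
  proof -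
    have "coords (cscale c x) = scaleC_vec c (coords x)"
      by (simp add: coords_cscale scaleC_vec_def)
    thus ?thesis
      using T coords[of x] by (simp add: l2_op_def bounded_op_def mk_l2_scale bounded_op_ell2)
  qed
  moreover have "norm (l2_op T x) \<le> K * norm x" for x
  proof -
    have "norm (l2_op T x) = l2norm (T (coords x))"
      by (rule norm_l2_op[OF T])
    also have "\<dots> \<le> K * l2norm (coords x)"
      using K coords[of x] by blast
    finally show ?thesis
      by (simp add: norm_coords)
  qed
  ultimately show ?thesis
    unfolding bounded_clinear_def by blast
qed

lemma bounded_op_of_bounded_clinear:
  assumes A: "bounded_clinear A"
  shows "bounded_op (\<lambda>f. coords (A (mk_l2 f)))"
proof -
  interpret bounded_linear A
    by (rule bounded_clinear_imp_bounded_linear[OF A])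
  obtain K where K: "\<And>x. norm (A x) \<le> norm x * K"
    using bounded by blast
  show ?thesis
    unfolding bounded_op_def
  proof (intro conjI ballI allI)
    show "coords (A (mk_l2 f)) \<in> ell2" for f
      by (rule coords)
    show "coords (A (mk_l2 (f + g))) = coords (A (mk_l2 f)) + coords (A (mk_l2 g))"
      if "f \<in> ell2" "g \<in> ell2" for f g
      using that by (simp add: mk_l2_add add coords_plus)
    show "coords (A (mk_l2 (scaleC_vec c f))) = scaleC_vec c (coords (A (mk_l2 f)))"
      if "f \<in> ell2" for c f
      by (simp only: mk_l2_scale[OF that] bounded_clinear_cscale[OF A])
         (simp add: coords_cscale scaleC_vec_def)
    have "l2norm (coords (A (mk_l2 f))) \<le> K * l2norm f" if "f \<in> ell2" for f
      using K[of "mk_l2 f"] that by (simp add: norm_coords l2norm_mk_l2 mult.commute)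
    thus "\<exists>K. \<forall>f\<in>ell2. l2norm (coords (A (mk_l2 f))) \<le> K * l2norm f"
      by blast
  qed
qed

lemma bounded_clinear_diff:
  assumes A: "bounded_clinear A" and B: "bounded_clinear B"
  shows "bounded_clinear (\<lambda>x. A x - B x)"
proof -
  interpret bounded_linear "\<lambda>x. A x - B x"
    using A B by (intro bounded_linear_sub bounded_clinear_imp_bounded_linear)
  obtain K where "\<And>x. norm (A x - B x) \<le> norm x * K"
    using bounded by blast
  hence "\<forall>x. norm (A x - B x) \<le> K * norm x"
    by (simp add: mult.commute)
  moreover have "\<forall>x y. A (x + y) - B (x + y) = A x - B x + (A y - B y)"
    by (simp add: add)
  moreover have "\<forall>c x. A (cscale c x) - B (cscale c x) = cscale c (A x - B x)"
    by (simp add: bounded_clinear_cscale[OF A] bounded_clinear_cscale[OF B] cscale_diff_right)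
  ultimately show ?thesis
    unfolding bounded_clinear_def by blast
qed

lemma bounded_op_cong:
  assumes "bounded_op T" "\<And>f. f \<in> ell2 \<Longrightarrow> T' f = T f"
  shows "bounded_op T'"
proof -
  have "f \<in> ell2 \<Longrightarrow> scaleC_vec c f \<in> ell2" for c f
    by (simp add: scaleC_vec_def ell2_scale)
  with assms show ?thesis
    unfolding bounded_op_def by (simp add: ell2_add)
qed

lemma bounded_op_diff:
  assumes T1: "bounded_op T1" and T2: "bounded_op T2"
  shows "bounded_op (\<lambda>f. T1 f - T2 f)"
proof (rule bounded_op_cong)
  show "bounded_op (\<lambda>f. coords (l2_op T1 (mk_l2 f) - l2_op T2 (mk_l2 f)))"
    by (intro bounded_op_of_bounded_clinear bounded_clinear_diff bounded_clinear_l2_op T1 T2)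
  show "T1 f - T2 f = coords (l2_op T1 (mk_l2 f) - l2_op T2 (mk_l2 f))" if "f \<in> ell2" for f
    using that by (simp add: coords_minus coords_l2_op[OF T1] coords_l2_op[OF T2] mk_l2_inverse)
qed

lemma l2_op_diff:
  "bounded_op T1 \<Longrightarrow> bounded_op T2 \<Longrightarrow> l2_op (\<lambda>f. T1 f - T2 f) x = l2_op T1 x - l2_op T2 x"
  unfolding l2_op_def by (rule mk_l2_diff) (simp_all add: bounded_op_ell2 coords)

lemma compact_op_convergent_subseq:
  fixes x :: "nat \<Rightarrow> l2"
  assumes "compact_op T" "\<And>n. norm (x n) \<le> 1"
  shows "\<exists>r y. strict_mono r \<and> (\<lambda>n. l2_op T (x (r n))) \<longlonglongrightarrow> y"
proof -
  have T: "bounded_op T"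
    using assms(1) by (simp add: compact_op_def)
  have unit: "\<forall>n. coords (x n) \<in> ell2 \<and> l2norm (coords (x n)) \<le> 1"
    using assms(2) by (simp add: coords norm_coords)
  have compact: "\<forall>x :: nat \<Rightarrow> nat \<Rightarrow> complex. (\<forall>n. x n \<in> ell2 \<and> l2norm (x n) \<le> 1) \<longrightarrow>
      (\<exists>r y. strict_mono r \<and> y \<in> ell2 \<and> (\<lambda>n. l2norm (T (x (r n)) - y)) \<longlonglongrightarrow> 0)"
    using assms(1) unfolding compact_op_def by (rule conjunct2)
  obtain r y where r: "strict_mono r" and y: "y \<in> ell2"
    and lim: "(\<lambda>n. l2norm (T (coords (x (r n))) - y)) \<longlonglongrightarrow> 0"
    using mp[OF spec[OF compact, of "\<lambda>n. coords (x n)"] unit] by blast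
  have "l2norm (T (coords (x (r n))) - y) = norm (l2_op T (x (r n)) - mk_l2 y)" for n
    using y by (simp add: l2norm_mk_l2 ell2_diff coords bounded_op_ell2[OF T] mk_l2_diff l2_op_def)
  with lim have "(\<lambda>n. l2_op T (x (r n))) \<longlonglongrightarrow> mk_l2 y"
    by (simp add: tendsto_norm_zero_iff LIM_zero_iff)
  with r show ?thesis
    by blast
qed

lemma bdd_above_opnorm:
  assumes "bounded_op T"
  shows "bdd_above ((\<lambda>f. l2norm (T f)) ` {f \<in> ell2. l2norm f \<le> 1})"
proof -
  obtain K where K: "\<forall>f\<in>ell2. l2norm (T f) \<le> K * l2norm f"
    using assms by (auto simp: bounded_op_def)
  have bound: "l2norm (T f) \<le> max K 0" if "f \<in> ell2" "l2norm f \<le> 1" for f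
  proof -
    have "l2norm (T f) \<le> K * l2norm f"
      using K that by blast
    also have "\<dots> \<le> max K 0 * l2norm f"
      using that by (intro mult_right_mono) (simp_all add: l2norm_nonneg)
    also have "\<dots> \<le> max K 0"
      using that by (simp add: mult_left_le)
    finally show ?thesis .
  qed
  show ?thesis
    by (rule bdd_aboveI2) (use bound in blast)
qed

lemma opnorm_nonneg:
  assumes "bounded_op T"
  shows "0 \<le> opnorm T"
proof -
  have "0 \<in> {f \<in> ell2. l2norm f \<le> 1}"
    by (simp add: ell2_zero l2norm_def)
  have "0 \<le> l2norm (T 0)"
    by (rule l2norm_nonneg[OF bounded_op_ell2[OF assms ell2_zero]])
  also have "\<dots> \<le> opnorm T"
    unfolding opnorm_def by (rule cSUP_upper[OF \<open>0 \<in> _\<close> bdd_above_opnorm[OF assms]])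
  finally show ?thesis .
qed

lemma opnorm_le:
  assumes "bounded_op T" "\<And>x. norm x \<le> 1 \<Longrightarrow> norm (l2_op T x) \<le> c"
  shows "opnorm T \<le> c"
  unfolding opnorm_def
proof (rule cSUP_least)
  show "{f \<in> ell2. l2norm f \<le> 1} \<noteq> {}"
    using ell2_zero by (auto simp: l2norm_def)
  fix f
  assume f: "f \<in> {f \<in> ell2. l2norm f \<le> 1}"
  hence "norm (mk_l2 f) \<le> 1"
    using l2norm_mk_l2[of f] by simp
  from assms(2)[OF this] f show "l2norm (T f) \<le> c"
    by (simp add: norm_l2_op[OF assms(1)] mk_l2_inverse)
qed

section \<open>Compact operators are small far out in the basis\<close>

context orthonormal_basis
begin

lemma bounded_clinear_lincomb:
  "bounded_clinear A \<Longrightarrow> A (lincomb I \<alpha>) = (\<Sum>i\<in>I. cscale (\<alpha> i) (A (E i)))"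
  unfolding lincomb_def
  by (simp add: linear_sum[OF bounded_linear.linear[OF bounded_clinear_imp_bounded_linear]]
      bounded_clinear_cscale)

definition small_beyond :: "(l2 \<Rightarrow> l2) \<Rightarrow> nat \<Rightarrow> real \<Rightarrow> bool" where
  "small_beyond A N \<delta> \<longleftrightarrow> (\<forall>I \<alpha>. finite I \<longrightarrow> I \<subseteq> {N..} \<longrightarrow> (\<Sum>i\<in>I. (cmod (\<alpha> i))\<^sup>2) \<le> 1 \<longrightarrow>
     norm (A (lincomb I \<alpha>)) < \<delta>)"

lemma small_beyondD:
  "small_beyond A N \<delta> \<Longrightarrow> finite I \<Longrightarrow> I \<subseteq> {N..} \<Longrightarrow> (\<Sum>i\<in>I. (cmod (\<alpha> i))\<^sup>2) \<le> 1 \<Longrightarrow>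
     norm (A (lincomb I \<alpha>)) < \<delta>"
  by (simp add: small_beyond_def)

lemma small_beyond_mono: "small_beyond A N \<delta> \<Longrightarrow> N \<le> N' \<Longrightarrow> small_beyond A N' \<delta>"
  unfolding small_beyond_def by (meson atLeast_subset_iff order_trans)

text \<open>The entries of a row of the matrix of a bounded operator are square-summable: they are the
  coefficients of the image of a basis vector under the adjoint.\<close>

lemma summable_matrix_row:
  assumes A: "bounded_clinear A"
  shows "summable (\<lambda>i. (cmod (cinner (A (E i)) (E l)))\<^sup>2)"
proof -
  obtain B where B: "B > 0" "\<And>x. norm (A x) \<le> norm x * B"
    using bounded_linear.pos_bounded[OF bounded_clinear_imp_bounded_linear[OF A]] by blast
  define \<gamma> where "\<gamma> i = cinner (A (E i)) (E l)" for i
  have "(\<Sum>i<K. (cmod (\<gamma> i))\<^sup>2) \<le> B\<^sup>2" for K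
  proof -
    define s where "s = (\<Sum>i<K. (cmod (\<gamma> i))\<^sup>2)"
    define w where "w = lincomb {..<K} (\<lambda>i. cnj (\<gamma> i))"
    have s0: "0 \<le> s"
      by (simp add: s_def sum_nonneg)
    have "cinner (A w) (E l) = (\<Sum>i<K. cnj (\<gamma> i) * \<gamma> i)"
      unfolding w_def bounded_clinear_lincomb[OF A] cinner_sum_left cinner_cscale_left \<gamma>_def ..
    also have "\<dots> = of_real s"
      unfolding s_def of_real_sum
      by (rule sum.cong) (simp_all add: complex_norm_square[symmetric] mult.commute)
    finally have "s = cmod (cinner (A w) (E l))"
      using s0 by simp
    also have "\<dots> \<le> norm (A w)"
      by (rule norm_coeff_le)
    also have "\<dots> \<le> sqrt s * B"
      using B(2)[of w] by (simp add: w_def s_def norm_lincomb)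
    finally have le: "s \<le> sqrt s * B" .
    have "sqrt s \<le> B"
    proof (cases "s = 0")
      case False
      hence "0 < sqrt s"
        using s0 by simp
      moreover have "sqrt s * sqrt s \<le> B * sqrt s"
        using le s0 by (simp add: mult.commute)
      ultimately show ?thesis
        by (rule mult_right_le_imp_le[rotated])
    qed (use B(1) in simp)
    hence "(sqrt s)\<^sup>2 \<le> B\<^sup>2"
      by (rule power_mono) (simp add: s0)
    thus ?thesis
      using s0 by (simp add: s_def)
  qed
  thus ?thesis
    unfolding \<gamma>_def by (intro summableI_nonneg_bounded[where x = "B\<^sup>2"]) simp_all
qed

lemma norm_matrix_row_block_le:
  assumes A: "bounded_clinear A"
    and I: "finite I" "I \<subseteq> {N..}" "(\<Sum>i\<in>I. (cmod (\<alpha> i))\<^sup>2) \<le> 1"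
  shows "cmod (cinner (A (lincomb I \<alpha>)) (E l)) \<le> sqrt (\<Sum>i. (cmod (cinner (A (E (i + N))) (E l)))\<^sup>2)"
proof -
  define \<gamma> where "\<gamma> i = cinner (A (E i)) (E l)" for i
  have "cinner (A (lincomb I \<alpha>)) (E l) = cinner (lincomb I \<alpha>) (lincomb I (\<lambda>i. cnj (\<gamma> i)))"
    by (simp add: bounded_clinear_lincomb[OF A] cinner_sum_left cinner_cscale_left
        cinner_lincomb_lincomb[OF I(1)] \<gamma>_def)
  hence "cmod (cinner (A (lincomb I \<alpha>)) (E l)) \<le> norm (lincomb I \<alpha>) * norm (lincomb I (\<lambda>i. cnj (\<gamma> i)))"
    by (simp add: norm_cinner_le)
  also have "\<dots> \<le> norm (lincomb I (\<lambda>i. cnj (\<gamma> i)))"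
    using norm_lincomb_le_1[OF I(1,3)] by (simp add: mult_left_le_one_le)
  also have "\<dots> \<le> sqrt (\<Sum>i. (cmod (\<gamma> (i + N)))\<^sup>2)"
    unfolding norm_lincomb[OF I(1)] complex_mod_cnj real_sqrt_le_iff
    using I(1,2) unfolding \<gamma>_def by (intro sum_le_suminf_shift summable_matrix_row[OF A]) simp_all
  finally show ?thesis
    by (simp add: \<gamma>_def)
qed

text \<open>Block vectors far out in the basis tend weakly to zero, and a compact operator maps weakly
  null sequences to norm null ones.\<close>

lemma compact_op_small_beyond:
  assumes T: "compact_op T" and \<delta>: "\<delta> > 0"
  shows "\<exists>N. small_beyond (l2_op T) N \<delta>"
proof (rule ccontr)
  assume "\<not> ?thesis"
  hence "\<forall>N. \<exists>I \<alpha>. finite I \<and> I \<subseteq> {N..} \<and> (\<Sum>i\<in>I. (cmod (\<alpha> i))\<^sup>2) \<le> 1 \<and>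
      \<delta> \<le> norm (l2_op T (lincomb I \<alpha>))"
    unfolding small_beyond_def by (auto simp: not_less)
  from choice[OF this] obtain I where "\<forall>N. \<exists>\<alpha>. finite (I N) \<and> I N \<subseteq> {N..} \<and>
      (\<Sum>i\<in>I N. (cmod (\<alpha> i))\<^sup>2) \<le> 1 \<and> \<delta> \<le> norm (l2_op T (lincomb (I N) \<alpha>))" ..
  from choice[OF this] obtain \<alpha> where "\<forall>N. finite (I N) \<and> I N \<subseteq> {N..} \<and>
      (\<Sum>i\<in>I N. (cmod (\<alpha> N i))\<^sup>2) \<le> 1 \<and> \<delta> \<le> norm (l2_op T (lincomb (I N) (\<alpha> N)))" ..
  hence I: "\<And>N. finite (I N)" "\<And>N. I N \<subseteq> {N..}" "\<And>N. (\<Sum>i\<in>I N. (cmod (\<alpha> N i))\<^sup>2) \<le> 1"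
    and big: "\<And>N. \<delta> \<le> norm (l2_op T (lincomb (I N) (\<alpha> N)))"
    by auto
  define Z where "Z N = lincomb (I N) (\<alpha> N)" for N
  have A: "bounded_clinear (l2_op T)"
    using T by (simp add: compact_op_def bounded_clinear_l2_op)
  obtain r y where r: "strict_mono r" and lim: "(\<lambda>n. l2_op T (Z (r n))) \<longlonglongrightarrow> y"
    using compact_op_convergent_subseq[OF T, of Z] norm_lincomb_le_1[OF I(1) I(3)]
    unfolding Z_def by blast
  have "cinner y (E l) = 0" for l
  proof (rule LIMSEQ_unique)
    show "(\<lambda>n. cinner (l2_op T (Z (r n))) (E l)) \<longlonglongrightarrow> cinner y (E l)"
      by (rule bounded_linear.tendsto[OF bounded_linear_cinner_left lim])
    define t where "t N = sqrt (\<Sum>i. (cmod (cinner (l2_op T (E (i + N))) (E l)))\<^sup>2)" for N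
    have "t \<longlonglongrightarrow> sqrt 0"
      unfolding t_def by (intro tendsto_real_sqrt suminf_shift_tendsto_zero summable_matrix_row A)
    show "(\<lambda>n. cinner (l2_op T (Z (r n))) (E l)) \<longlonglongrightarrow> 0"
    proof (rule Lim_null_comparison)
      show "\<forall>\<^sub>F n in sequentially. norm (cinner (l2_op T (Z (r n))) (E l)) \<le> t (r n)"
        unfolding Z_def t_def by (intro always_eventually allI norm_matrix_row_block_le[OF A I(1,2,3)])
      show "(\<lambda>n. t (r n)) \<longlonglongrightarrow> 0"
        using filterlim_compose[OF \<open>t \<longlonglongrightarrow> sqrt 0\<close> filterlim_subseq[OF r]] by simp
    qed
  qed
  hence "y = 0"
    by (rule complete)
  hence "(\<lambda>n. norm (l2_op T (Z (r n)))) \<longlonglongrightarrow> 0"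
    using tendsto_norm[OF lim] by simp
  then obtain n where "norm (norm (l2_op T (Z (r n))) - 0) < \<delta>"
    using LIMSEQ_D[OF _ \<delta>] by blast
  moreover have "\<delta> \<le> norm (l2_op T (Z (r n)))"
    unfolding Z_def by (rule big)
  ultimately show False
    by simp
qed

end

lemma has_sot_sumD:
  "has_sot_sum b M S \<Longrightarrow> f \<in> ell2 \<Longrightarrow> \<epsilon> > 0 \<Longrightarrow> \<exists>F0. finite F0 \<and> F0 \<subseteq> M \<and>
    (\<forall>F. finite F \<and> F0 \<subseteq> F \<and> F \<subseteq> M \<longrightarrow> l2norm (S f - (\<Sum>n\<in>F. b n f)) < \<epsilon>)"
  unfolding has_sot_sum_def by blast

lemma has_sot_sum_at:
  assumes S: "has_sot_sum b M S" and b: "\<And>n. bounded_op (b n)" and r: "r > 0"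
  shows "\<exists>F0. finite F0 \<and> F0 \<subseteq> M \<and> (\<forall>F. finite F \<and> F0 \<subseteq> F \<and> F \<subseteq> M \<longrightarrow>
    norm (l2_op S x - (\<Sum>n\<in>F. l2_op (b n) x)) < r)"
proof -
  have S_op: "bounded_op S"
    using S by (simp add: has_sot_sum_def)
  from has_sot_sumD[OF S coords[of x] r] obtain F0 where F0: "finite F0" "F0 \<subseteq> M"
    "\<forall>F. finite F \<and> F0 \<subseteq> F \<and> F \<subseteq> M \<longrightarrow> l2norm (S (coords x) - (\<Sum>n\<in>F. b n (coords x))) < r"
    by blast
  have eq: "l2norm (S (coords x) - (\<Sum>n\<in>F. b n (coords x))) = norm (l2_op S x - (\<Sum>n\<in>F. l2_op (b n) x))" for F
  proof -
    have Sx: "S (coords x) \<in> ell2" and bx: "\<And>n. b n (coords x) \<in> ell2"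
      by (simp_all add: bounded_op_ell2 S_op b coords)
    have "l2norm (S (coords x) - (\<Sum>n\<in>F. b n (coords x)))
        = norm (mk_l2 (S (coords x) - (\<Sum>n\<in>F. b n (coords x))))"
      by (rule l2norm_mk_l2) (use Sx bx in \<open>simp add: ell2_diff ell2_sum\<close>)
    also have "mk_l2 (S (coords x) - (\<Sum>n\<in>F. b n (coords x))) = l2_op S x - (\<Sum>n\<in>F. l2_op (b n) x)"
      unfolding l2_op_def by (simp only: mk_l2_diff[OF Sx ell2_sum[OF bx]] mk_l2_sum[OF bx])
    finally show ?thesis .
  qed
  show ?thesis
    using F0 by (intro exI[of _ F0]) (simp add: eq)
qed

lemma has_sot_sum_at_finite:
  assumes S: "has_sot_sum b M S" and b: "\<And>n. bounded_op (b n)" and r: "r > 0"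
    and "finite X"
  shows "\<exists>F0. finite F0 \<and> F0 \<subseteq> M \<and> (\<forall>F. finite F \<and> F0 \<subseteq> F \<and> F \<subseteq> M \<longrightarrow>
    (\<forall>x\<in>X. norm (l2_op S x - (\<Sum>n\<in>F. l2_op (b n) x)) < r))"
  using \<open>finite X\<close>
proof (induction X rule: finite_induct)
  case (insert x X)
  from insert.IH obtain F1 where F1: "finite F1 \<and> F1 \<subseteq> M \<and> (\<forall>F. finite F \<and> F1 \<subseteq> F \<and> F \<subseteq> M \<longrightarrow>
    (\<forall>x\<in>X. norm (l2_op S x - (\<Sum>n\<in>F. l2_op (b n) x)) < r))" ..
  from has_sot_sum_at[OF S b r, of x] obtain F2 where F2: "finite F2 \<and> F2 \<subseteq> M \<and>
    (\<forall>F. finite F \<and> F2 \<subseteq> F \<and> F \<subseteq> M \<longrightarrow> norm (l2_op S x - (\<Sum>n\<in>F. l2_op (b n) x)) < r)" ..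
  show ?case
  proof (intro exI[of _ "F1 \<union> F2"] conjI allI impI ballI)
    show "finite (F1 \<union> F2)" "F1 \<union> F2 \<subseteq> M"
      using F1 F2 by simp_all
    fix F y
    assume "finite F \<and> F1 \<union> F2 \<subseteq> F \<and> F \<subseteq> M" "y \<in> insert x X"
    thus "norm (l2_op S y - (\<Sum>n\<in>F. l2_op (b n) y)) < r"
      using F1 F2 by auto
  qed
qed (intro exI[of _ "{}"], simp)

lemma has_sot_sum_eqI:
  assumes S: "has_sot_sum b M S" and f: "f \<in> ell2" and g: "g \<in> ell2"
    and J: "finite J" "J \<subseteq> M"
    and sums: "\<And>F. finite F \<Longrightarrow> J \<subseteq> F \<Longrightarrow> F \<subseteq> M \<Longrightarrow> (\<Sum>n\<in>F. b n f) = g"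
  shows "S f = g"
proof -
  have Sf: "S f \<in> ell2"
    using S f by (simp add: has_sot_sum_def bounded_op_ell2)
  have "l2norm (S f - g) < r" if "r > 0" for r
  proof -
    from has_sot_sumD[OF S f that] obtain F0 where F0: "finite F0" "F0 \<subseteq> M"
      "\<forall>F. finite F \<and> F0 \<subseteq> F \<and> F \<subseteq> M \<longrightarrow> l2norm (S f - (\<Sum>n\<in>F. b n f)) < r"
      by blast
    have "l2norm (S f - (\<Sum>n\<in>F0 \<union> J. b n f)) < r"
      using F0 J by simp
    thus ?thesis
      using sums[of "F0 \<union> J"] F0 J by simp
  qed
  hence small: "norm (mk_l2 (S f) - mk_l2 g) < r" if "r > 0" for r
    using that by (simp add: l2norm_mk_l2 ell2_diff[OF Sf g] mk_l2_diff[OF Sf g])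
  have "mk_l2 (S f) = mk_l2 g"
  proof (rule ccontr)
    assume "mk_l2 (S f) \<noteq> mk_l2 g"
    hence "norm (mk_l2 (S f) - mk_l2 g) > 0"
      by simp
    from small[OF this] show False
      by simp
  qed
  thus ?thesis
    using Sf g by (simp add: mk_l2_inject)
qed

section \<open>The conditional expectation onto the diagonal\<close>

context orthonormal_basis
begin

abbreviation basis_coords :: "nat \<Rightarrow> nat \<Rightarrow> complex" where
  "basis_coords \<equiv> \<lambda>n. coords (E n)"

definition diag_coeff :: "(l2 \<Rightarrow> l2) \<Rightarrow> nat \<Rightarrow> complex" where
  "diag_coeff A m = cinner (A (E m)) (E m)"

lemma norm_diag_coeff_le: "cmod (diag_coeff A m) \<le> norm (A (E m))"
  unfolding diag_coeff_def by (rule norm_coeff_le)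

lemma compression_apply:
  assumes a: "bounded_op a" and f: "f \<in> ell2"
  shows "proj basis_coords n (a (proj basis_coords n f))
    = coords (cscale (cinner (mk_l2 f) (E n) * diag_coeff (l2_op a) n) (E n))"
proof -
  have proj: "proj basis_coords n g = coords (cscale (cinner (mk_l2 g) (E n)) (E n))"
    if "g \<in> ell2" for g
    using that by (simp add: proj_def cinner_def mk_l2_inverse scaleC_vec_def coords_cscale)
  have "a (proj basis_coords n f) = coords (cscale (cinner (mk_l2 f) (E n)) (l2_op a (E n)))"
    unfolding proj[OF f]
    by (simp add: coords_l2_op[OF a, symmetric] bounded_clinear_cscale[OF bounded_clinear_l2_op[OF a]])
  thus ?thesis
    by (simp add: proj coords coords_inverse cinner_cscale_left diag_coeff_def)
qed

definition diag_mult :: "(nat \<Rightarrow> complex) \<Rightarrow> l2 \<Rightarrow> l2" where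
  "diag_mult \<mu> x = lim (\<lambda>K. lincomb {..<K} (\<lambda>m. cinner x (E m) * \<mu> m))"

lemma diag_mult_converges:
  assumes \<mu>: "\<And>m. cmod (\<mu> m) \<le> B"
  shows "(\<lambda>K. lincomb {..<K} (\<lambda>m. cinner x (E m) * \<mu> m)) \<longlonglongrightarrow> diag_mult \<mu> x"
    and "r > 0 \<Longrightarrow> \<exists>K. \<forall>F. finite F \<and> {..<K} \<subseteq> F \<longrightarrow>
      norm (diag_mult \<mu> x - lincomb F (\<lambda>m. cinner x (E m) * \<mu> m)) < r"
proof -
  have "(cmod (cinner x (E m) * \<mu> m))\<^sup>2 \<le> B\<^sup>2 * (cmod (cinner x (E m)))\<^sup>2" for m
  proof -
    have "(cmod (\<mu> m))\<^sup>2 \<le> B\<^sup>2"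
      using \<mu>[of m] by (intro power_mono) simp_all
    hence "(cmod (\<mu> m))\<^sup>2 * (cmod (cinner x (E m)))\<^sup>2 \<le> B\<^sup>2 * (cmod (cinner x (E m)))\<^sup>2"
      by (rule mult_right_mono) simp
    thus ?thesis
      by (simp add: norm_mult power_mult_distrib mult.commute)
  qed
  hence summable: "summable (\<lambda>m. (cmod (cinner x (E m) * \<mu> m))\<^sup>2)"
    by (intro summable_comparison_test'[OF summable_mult[OF summable_coeffs]]) simp
  thus lim: "(\<lambda>K. lincomb {..<K} (\<lambda>m. cinner x (E m) * \<mu> m)) \<longlonglongrightarrow> diag_mult \<mu> x"
    unfolding diag_mult_def by (intro convergent_LIMSEQ_iff[THEN iffD1] lincomb_convergent)
  show "r > 0 \<Longrightarrow> \<exists>K. \<forall>F. finite F \<and> {..<K} \<subseteq> F \<longrightarrow>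
      norm (diag_mult \<mu> x - lincomb F (\<lambda>m. cinner x (E m) * \<mu> m)) < r"
    by (rule lincomb_tendsto_unconditionally[OF summable lim])
qed

lemma bounded_clinear_diag_mult:
  assumes \<mu>: "\<And>m. cmod (\<mu> m) \<le> B"
  shows "bounded_clinear (diag_mult \<mu>)"
proof -
  note lim = diag_mult_converges(1)[OF \<mu>]
  have add: "diag_mult \<mu> (x + y) = diag_mult \<mu> x + diag_mult \<mu> y" for x y
  proof (rule LIMSEQ_unique[OF lim])
    show "(\<lambda>K. lincomb {..<K} (\<lambda>m. cinner (x + y) (E m) * \<mu> m))
        \<longlonglongrightarrow> diag_mult \<mu> x + diag_mult \<mu> y"
      using tendsto_add[OF lim[of x] lim[of y]]
      by (simp add: cinner_add_left distrib_right lincomb_add_coeffs)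
  qed
  have scale: "diag_mult \<mu> (cscale c x) = cscale c (diag_mult \<mu> x)" for c x
  proof (rule LIMSEQ_unique[OF lim])
    show "(\<lambda>K. lincomb {..<K} (\<lambda>m. cinner (cscale c x) (E m) * \<mu> m))
        \<longlonglongrightarrow> cscale c (diag_mult \<mu> x)"
      using bounded_linear.tendsto[OF bounded_linear_cscale lim[of x]]
      by (simp add: cinner_cscale_left mult.assoc lincomb_scale_coeffs)
  qed
  have bound: "norm (diag_mult \<mu> x) \<le> B * norm x" for x
  proof (rule tendsto_upperbound[OF tendsto_norm[OF lim]])
    have "B \<ge> 0"
      using \<mu>[of 0] norm_ge_zero order_trans by blast
    have "(norm (lincomb {..<K} (\<lambda>m. cinner x (E m) * \<mu> m)))\<^sup>2 \<le> (B * norm x)\<^sup>2" for K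
    proof -
      have "(norm (lincomb {..<K} (\<lambda>m. cinner x (E m) * \<mu> m)))\<^sup>2
          = (\<Sum>m<K. (cmod (cinner x (E m)))\<^sup>2 * (cmod (\<mu> m))\<^sup>2)"
        by (simp add: norm_lincomb_sq norm_mult power_mult_distrib)
      also have "\<dots> \<le> (\<Sum>m<K. (cmod (cinner x (E m)))\<^sup>2 * B\<^sup>2)"
        using \<mu> by (intro sum_mono mult_left_mono power_mono) simp_all
      also have "\<dots> = (\<Sum>m<K. (cmod (cinner x (E m)))\<^sup>2) * B\<^sup>2"
        by (simp add: sum_distrib_right)
      also have "\<dots> \<le> (norm x)\<^sup>2 * B\<^sup>2"
        by (intro mult_right_mono bessel_inequality) simp_all
      finally show ?thesis
        by (simp add: power_mult_distrib mult.commute)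
    qed
    hence "norm (lincomb {..<K} (\<lambda>m. cinner x (E m) * \<mu> m)) \<le> B * norm x" for K
      by (rule power2_le_imp_le) (simp add: \<open>B \<ge> 0\<close>)
    thus "\<forall>\<^sub>F K in sequentially. norm (lincomb {..<K} (\<lambda>m. cinner x (E m) * \<mu> m)) \<le> B * norm x"
      by simp
  qed simp
  show ?thesis
    unfolding bounded_clinear_def using add scale bound by blast
qed

lemma lincomb_mono_neutral:
  "finite F \<Longrightarrow> I \<subseteq> F \<Longrightarrow> lincomb F (\<lambda>n. if n \<in> I then \<beta> n else 0) = lincomb I \<beta>"
  unfolding lincomb_def by (rule sum.mono_neutral_cong_right) (simp_all add: cscale_zero_left)

lemma has_sot_sum_compressions:
  assumes a: "bounded_op a"
  shows "has_sot_sum (\<lambda>n. proj basis_coords n \<circ> a \<circ> proj basis_coords n) UNIV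
    (\<lambda>f. coords (diag_mult (diag_coeff (l2_op a)) (mk_l2 f)))"
proof -
  define \<mu> where "\<mu> = diag_coeff (l2_op a)"
  obtain K where K: "\<And>x. norm (l2_op a x) \<le> norm x * K"
    using bounded_linear.bounded[OF bounded_clinear_imp_bounded_linear[OF bounded_clinear_l2_op[OF a]]]
    by blast
  have \<mu>: "cmod (\<mu> m) \<le> K" for m
    using norm_diag_coeff_le[of "l2_op a" m] K[of "E m"] by (simp add: \<mu>_def norm_basis)
  have partial_sum: "(\<Sum>n\<in>F. (proj basis_coords n \<circ> a \<circ> proj basis_coords n) f)
      = coords (lincomb F (\<lambda>m. cinner (mk_l2 f) (E m) * \<mu> m))" if "f \<in> ell2" for f F
    using that by (simp add: compression_apply[OF a] lincomb_def coords_sum \<mu>_def)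
  show ?thesis
    unfolding has_sot_sum_def \<mu>_def[symmetric]
  proof (intro conjI ballI allI impI)
    show "bounded_op (\<lambda>f. coords (diag_mult \<mu> (mk_l2 f)))"
      by (rule bounded_op_of_bounded_clinear[OF bounded_clinear_diag_mult[OF \<mu>]])
    fix f :: "nat \<Rightarrow> complex" and \<epsilon> :: real
    assume f: "f \<in> ell2" and \<epsilon>: "\<epsilon> > 0"
    from diag_mult_converges(2)[where x = "mk_l2 f", OF \<mu> \<epsilon>]
    obtain N where N: "\<forall>F. finite F \<and> {..<N} \<subseteq> F \<longrightarrow>
        norm (diag_mult \<mu> (mk_l2 f) - lincomb F (\<lambda>m. cinner (mk_l2 f) (E m) * \<mu> m)) < \<epsilon>" ..
    have "l2norm (coords (diag_mult \<mu> (mk_l2 f)) -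
        (\<Sum>n\<in>F. (proj basis_coords n \<circ> a \<circ> proj basis_coords n) f)) < \<epsilon>"
      if "finite F" "{..<N} \<subseteq> F" for F
    proof -
      have "coords (diag_mult \<mu> (mk_l2 f)) - (\<Sum>n\<in>F. (proj basis_coords n \<circ> a \<circ> proj basis_coords n) f)
          = coords (diag_mult \<mu> (mk_l2 f) - lincomb F (\<lambda>m. cinner (mk_l2 f) (E m) * \<mu> m))"
        by (simp only: partial_sum[OF f] coords_minus)
      thus ?thesis
        using N that by (simp only: norm_coords)
    qed
    thus "\<exists>F0. finite F0 \<and> F0 \<subseteq> UNIV \<and> (\<forall>F. finite F \<and> F0 \<subseteq> F \<and> F \<subseteq> UNIV \<longrightarrow>
        l2norm (coords (diag_mult \<mu> (mk_l2 f)) -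
          (\<Sum>n\<in>F. (proj basis_coords n \<circ> a \<circ> proj basis_coords n) f)) < \<epsilon>)"
      by (intro exI[of _ "{..<N}"]) simp
  qed
qed

lemma has_sot_sum_cond_exp:
  assumes "bounded_op a"
  shows "has_sot_sum (\<lambda>n. proj basis_coords n \<circ> a \<circ> proj basis_coords n) UNIV (cond_exp basis_coords a)"
  unfolding cond_exp_def using has_sot_sum_compressions[OF assms]
  by (rule someI[where P = "has_sot_sum (\<lambda>n. proj basis_coords n \<circ> a \<circ> proj basis_coords n) UNIV"])

lemma bounded_op_cond_exp: "bounded_op a \<Longrightarrow> bounded_op (cond_exp basis_coords a)"
  using has_sot_sum_cond_exp by (simp add: has_sot_sum_def)

lemma l2_op_cond_exp_lincomb:
  assumes a: "bounded_op a" and I: "finite I"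
  shows "l2_op (cond_exp basis_coords a) (lincomb I \<alpha>) = lincomb I (\<lambda>i. \<alpha> i * diag_coeff (l2_op a) i)"
proof -
  define g where "g = coords (lincomb I (\<lambda>i. \<alpha> i * diag_coeff (l2_op a) i))"
  have "cond_exp basis_coords a (coords (lincomb I \<alpha>)) = g"
  proof (rule has_sot_sum_eqI[where J = I, OF has_sot_sum_cond_exp[OF a]])
    show "coords (lincomb I \<alpha>) \<in> ell2" "g \<in> ell2" "finite I" "I \<subseteq> UNIV"
      by (simp_all add: coords g_def I)
    fix F
    assume F: "finite F" "I \<subseteq> F"
    have "(\<Sum>n\<in>F. (proj basis_coords n \<circ> a \<circ> proj basis_coords n) (coords (lincomb I \<alpha>)))
        = (\<Sum>n\<in>F. coords (cscale (cinner (lincomb I \<alpha>) (E n) * diag_coeff (l2_op a) n) (E n)))"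
      by (simp add: compression_apply[OF a coords] coords_inverse)
    also have "\<dots> = coords (lincomb F (\<lambda>n. if n \<in> I then \<alpha> n * diag_coeff (l2_op a) n else 0))"
      unfolding cinner_lincomb_basis[OF I] lincomb_def[of F] coords_sum
      by (rule sum.cong) (simp_all add: cscale_zero_left)
    finally have "(\<Sum>n\<in>F. (proj basis_coords n \<circ> a \<circ> proj basis_coords n) (coords (lincomb I \<alpha>)))
        = coords (lincomb F (\<lambda>n. if n \<in> I then \<alpha> n * diag_coeff (l2_op a) n else 0))" .
    thus "(\<Sum>n\<in>F. (proj basis_coords n \<circ> a \<circ> proj basis_coords n) (coords (lincomb I \<alpha>))) = g"
      by (simp add: lincomb_mono_neutral[OF F] g_def)
  qed
  thus ?thesis
    by (simp add: l2_op_def g_def coords_inverse)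
qed

end

section \<open>Off-diagonal parts on blocks of the basis\<close>

context orthonormal_basis
begin

text \<open>The off-diagonal part \<open>A - \<bbbE>(A)\<close> evaluated at the block vector \<open>lincomb I \<alpha>\<close>.\<close>

definition offdiag :: "nat set \<Rightarrow> (nat \<Rightarrow> complex) \<Rightarrow> (l2 \<Rightarrow> l2) \<Rightarrow> l2" where
  "offdiag I \<alpha> A = A (lincomb I \<alpha>) - lincomb I (\<lambda>i. \<alpha> i * diag_coeff A i)"

lemma cond_exp_minus_lincomb:
  assumes "bounded_op a" "finite I"
  shows "l2_op (cond_exp basis_coords a) (lincomb I \<alpha>) - l2_op a (lincomb I \<alpha>) = - offdiag I \<alpha> (l2_op a)"
  by (simp add: offdiag_def l2_op_cond_exp_lincomb[OF assms])

lemma offdiag_add: "offdiag I \<alpha> (\<lambda>x. A x + B x) = offdiag I \<alpha> A + offdiag I \<alpha> B"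
  by (simp add: offdiag_def diag_coeff_def cinner_add_left distrib_left lincomb_add_coeffs)

lemma offdiag_zero: "offdiag I \<alpha> (\<lambda>x. 0) = 0"
  by (simp add: offdiag_def diag_coeff_def lincomb_def cscale_zero_left)

lemma offdiag_diff: "offdiag I \<alpha> (\<lambda>x. A x - B x) = offdiag I \<alpha> A - offdiag I \<alpha> B"
proof -
  have "offdiag I \<alpha> (\<lambda>x. A x - B x) + offdiag I \<alpha> B = offdiag I \<alpha> A"
    by (simp flip: offdiag_add)
  thus ?thesis
    by (simp add: eq_diff_eq)
qed

lemma offdiag_sum: "offdiag I \<alpha> (\<lambda>x. \<Sum>n\<in>F. C n x) = (\<Sum>n\<in>F. offdiag I \<alpha> (C n))"
  by (induction F rule: infinite_finite_induct) (simp_all add: offdiag_zero offdiag_add)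

lemma norm_offdiag_le:
  assumes "finite I" "\<And>i. i \<in> I \<Longrightarrow> cmod (\<alpha> i) \<le> 1"
  shows "norm (offdiag I \<alpha> A) \<le> norm (A (lincomb I \<alpha>)) + (\<Sum>i\<in>I. norm (A (E i)))"
proof -
  have "norm (lincomb I (\<lambda>i. \<alpha> i * diag_coeff A i)) \<le> (\<Sum>i\<in>I. cmod (\<alpha> i * diag_coeff A i))"
    by (rule norm_lincomb_le_sum)
  also have "\<dots> \<le> (\<Sum>i\<in>I. norm (A (E i)))"
  proof (rule sum_mono)
    fix i
    assume "i \<in> I"
    have "cmod (\<alpha> i) * cmod (diag_coeff A i) \<le> 1 * norm (A (E i))"
      by (rule mult_mono) (simp_all add: assms(2)[OF \<open>i \<in> I\<close>] norm_diag_coeff_le)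
    thus "cmod (\<alpha> i * diag_coeff A i) \<le> norm (A (E i))"
      by (simp add: norm_mult)
  qed
  moreover have "norm (offdiag I \<alpha> A)
      \<le> norm (A (lincomb I \<alpha>)) + norm (lincomb I (\<lambda>i. \<alpha> i * diag_coeff A i))"
    unfolding offdiag_def by (rule norm_triangle_ineq4)
  ultimately show ?thesis
    by linarith
qed

lemma norm_offdiag_le_head:
  assumes A: "bounded_clinear A" and I: "finite I" "I \<subseteq> {..<N}"
    and \<alpha>: "\<And>i. i \<in> I \<Longrightarrow> cmod (\<alpha> i) \<le> 1"
  shows "norm (offdiag I \<alpha> A) \<le> 2 * (\<Sum>m<N. norm (A (E m)))"
proof -
  have "norm (A (lincomb I \<alpha>)) \<le> (\<Sum>i\<in>I. norm (cscale (\<alpha> i) (A (E i))))"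
    unfolding bounded_clinear_lincomb[OF A] by (rule norm_sum)
  also have "\<dots> \<le> (\<Sum>i\<in>I. norm (A (E i)))"
    using \<alpha> by (intro sum_mono) (simp add: norm_cscale mult_left_le_one_le)
  finally have "norm (A (lincomb I \<alpha>)) \<le> (\<Sum>i\<in>I. norm (A (E i)))" .
  moreover have "(\<Sum>i\<in>I. norm (A (E i))) \<le> (\<Sum>m<N. norm (A (E m)))"
    using I by (intro sum_mono2) simp_all
  moreover have "norm (offdiag I \<alpha> A) \<le> norm (A (lincomb I \<alpha>)) + (\<Sum>i\<in>I. norm (A (E i)))"
    using I(1) \<alpha> by (rule norm_offdiag_le)
  ultimately show ?thesis
    by linarith
qed

lemma norm_offdiag_le_tail:
  assumes small: "small_beyond A N \<delta>"
    and I: "finite I" "I \<subseteq> {N..}" "(\<Sum>i\<in>I. (cmod (\<alpha> i))\<^sup>2) \<le> 1"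
  shows "norm (offdiag I \<alpha> A) \<le> 2 * \<delta>"
proof -
  have Ax: "norm (A (lincomb I \<alpha>)) < \<delta>"
    by (rule small_beyondD[OF small I])
  hence "\<delta> \<ge> 0"
    using norm_ge_zero[of "A (lincomb I \<alpha>)"] by linarith
  have basis_small: "norm (A (E i)) < \<delta>" if "i \<in> I" for i
  proof -
    have "norm (A (lincomb {i} (\<lambda>_. 1))) < \<delta>"
      using that I(2) by (intro small_beyondD[OF small]) auto
    thus ?thesis
      by (simp add: lincomb_def cscale_one)
  qed
  have "cmod (diag_coeff A i) \<le> \<delta>" if "i \<in> I" for i
    using norm_diag_coeff_le[of A i] basis_small[OF that] by linarith
  hence "(cmod (diag_coeff A i))\<^sup>2 \<le> \<delta>\<^sup>2" if "i \<in> I" for i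
    using that by (simp add: power_mono)
  hence "(norm (lincomb I (\<lambda>i. \<alpha> i * diag_coeff A i)))\<^sup>2 \<le> (\<Sum>i\<in>I. (cmod (\<alpha> i))\<^sup>2 * \<delta>\<^sup>2)"
    unfolding norm_lincomb_sq[OF I(1)] norm_mult power_mult_distrib
    by (intro sum_mono mult_left_mono) simp_all
  also have "\<dots> = (\<Sum>i\<in>I. (cmod (\<alpha> i))\<^sup>2) * \<delta>\<^sup>2"
    by (simp add: sum_distrib_right)
  also have "\<dots> \<le> \<delta>\<^sup>2"
    using I(3) by (simp add: mult_left_le_one_le sum_nonneg)
  finally have "norm (lincomb I (\<lambda>i. \<alpha> i * diag_coeff A i)) \<le> \<delta>"
    by (rule power2_le_imp_le) (fact \<open>\<delta> \<ge> 0\<close>)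
  thus ?thesis
    using Ax norm_triangle_ineq4[of "A (lincomb I \<alpha>)" "lincomb I (\<lambda>i. \<alpha> i * diag_coeff A i)"]
    unfolding offdiag_def by linarith
qed

lemma offdiag_diagonal:
  assumes D: "bounded_clinear D" and \<mu>: "\<And>i. D (E i) = cscale (\<mu> i) (E i)"
  shows "offdiag I \<alpha> D = 0"
proof -
  have "D (lincomb I \<alpha>) = lincomb I (\<lambda>i. \<alpha> i * \<mu> i)"
    unfolding bounded_clinear_lincomb[OF D] by (simp add: \<mu> lincomb_def cscale_cscale)
  moreover have "diag_coeff D i = \<mu> i" for i
    by (simp add: diag_coeff_def \<mu> cinner_cscale_left orthonormal)
  ultimately show ?thesis
    by (simp add: offdiag_def)
qed

lemma diag_plus_compact_offdiag_small:
  assumes S: "in_diag_plus_compact basis_coords S" and \<delta>: "\<delta> > 0"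
  shows "\<exists>N. \<forall>I \<alpha>. finite I \<longrightarrow> I \<subseteq> {N..} \<longrightarrow> (\<Sum>i\<in>I. (cmod (\<alpha> i))\<^sup>2) \<le> 1 \<longrightarrow>
    norm (offdiag I \<alpha> (l2_op S)) \<le> 2 * \<delta>"
proof -
  obtain d c where d: "diag_op basis_coords d" and c: "compact_op c"
    and S_eq: "\<forall>f\<in>ell2. S f = d f + c f"
    using S unfolding in_diag_plus_compact_def by blast
  have d_op: "bounded_op d" and c_op: "bounded_op c"
    using d c by (simp_all add: diag_op_def compact_op_def)
  have "l2_op S x = l2_op d x + l2_op c x" for x
    using S_eq coords[of x] unfolding l2_op_def
    by (simp add: mk_l2_add bounded_op_ell2[OF d_op] bounded_op_ell2[OF c_op] coords)
  hence S_split: "l2_op S = (\<lambda>x. l2_op d x + l2_op c x)"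
    by blast
  have "\<forall>i. \<exists>\<mu>. l2_op d (E i) = cscale \<mu> (E i)"
  proof
    fix i
    obtain \<mu> where "d (coords (E i)) = scaleC_vec \<mu> (coords (E i))"
      using d by (auto simp: diag_op_def)
    hence "l2_op d (E i) = cscale \<mu> (E i)"
      by (simp add: l2_op_def mk_l2_scale coords coords_inverse)
    thus "\<exists>\<mu>. l2_op d (E i) = cscale \<mu> (E i)" ..
  qed
  then obtain \<mu> where "\<And>i. l2_op d (E i) = cscale (\<mu> i) (E i)"
    by metis
  hence "offdiag I \<alpha> (l2_op d) = 0" for I \<alpha>
    by (rule offdiag_diagonal[OF bounded_clinear_l2_op[OF d_op]])
  moreover obtain N where "small_beyond (l2_op c) N \<delta>"
    using compact_op_small_beyond[OF c \<delta>] by blast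
  ultimately show ?thesis
    unfolding S_split offdiag_add by (auto intro: norm_offdiag_le_tail)
qed

lemma has_sot_sum_offdiag_approx:
  assumes S: "has_sot_sum b M S" and b: "\<And>m. bounded_op (b m)"
    and I: "finite I" and \<alpha>: "\<And>i. i \<in> I \<Longrightarrow> cmod (\<alpha> i) \<le> 1" and \<epsilon>: "\<epsilon> > 0"
  shows "\<exists>F0. finite F0 \<and> F0 \<subseteq> M \<and> (\<forall>F. finite F \<and> F0 \<subseteq> F \<and> F \<subseteq> M \<longrightarrow>
    norm (offdiag I \<alpha> (l2_op S) - (\<Sum>m\<in>F. offdiag I \<alpha> (l2_op (b m)))) \<le> \<epsilon>)"
proof -
  define r where "r = \<epsilon> / (real (card I) + 1)"
  have r: "r > 0"
    using \<epsilon> by (simp add: r_def)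
  from has_sot_sum_at_finite[OF S b r, of "insert (lincomb I \<alpha>) (E ` I)"] I
  obtain F0 where F0: "finite F0" "F0 \<subseteq> M" "\<forall>F. finite F \<and> F0 \<subseteq> F \<and> F \<subseteq> M \<longrightarrow>
      (\<forall>x\<in>insert (lincomb I \<alpha>) (E ` I). norm (l2_op S x - (\<Sum>m\<in>F. l2_op (b m) x)) < r)"
    by auto
  have approx: "norm (offdiag I \<alpha> (l2_op S) - (\<Sum>m\<in>F. offdiag I \<alpha> (l2_op (b m)))) \<le> \<epsilon>"
    if F: "finite F" "F0 \<subseteq> F" "F \<subseteq> M" for F
  proof -
    define G where "G x = l2_op S x - (\<Sum>m\<in>F. l2_op (b m) x)" for x
    have small: "norm (G x) < r" if "x \<in> insert (lincomb I \<alpha>) (E ` I)" for x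
      using F0(3) F that unfolding G_def by blast
    have "offdiag I \<alpha> (l2_op S) - (\<Sum>m\<in>F. offdiag I \<alpha> (l2_op (b m))) = offdiag I \<alpha> G"
      unfolding G_def offdiag_diff offdiag_sum ..
    also have "norm \<dots> \<le> norm (G (lincomb I \<alpha>)) + (\<Sum>i\<in>I. norm (G (E i)))"
      using I \<alpha> by (rule norm_offdiag_le)
    also have "\<dots> \<le> r + (\<Sum>i\<in>I. r)"
      using small by (intro add_mono sum_mono less_imp_le) auto
    also have "\<dots> = (real (card I) + 1) * r"
      by (simp add: algebra_simps)
    also have "\<dots> = \<epsilon>"
      unfolding r_def by (simp add: add_pos_nonneg[of 1, THEN less_imp_neq, symmetric] add.commute)
    finally show ?thesis .
  qed
  show ?thesis
    using F0(1,2) by (intro exI[of _ F0]) (simp add: approx)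
qed

end

section \<open>The gliding hump\<close>

text \<open>The tolerances \<open>\<eta> / 2 ^ (k + 4)\<close> are chosen so that all other members of the
  subsequence together perturb the \<open>k\<close>-th hump by at most \<open>\<eta> / 4\<close>.\<close>

locale gliding_hump = orthonormal_basis +
  fixes b :: "nat \<Rightarrow> (nat \<Rightarrow> complex) \<Rightarrow> nat \<Rightarrow> complex"
    and n :: "nat \<Rightarrow> nat" and cut :: "nat \<Rightarrow> nat"
    and I :: "nat \<Rightarrow> nat set" and \<alpha> :: "nat \<Rightarrow> nat \<Rightarrow> complex" and \<eta> :: real
  assumes bounded: "\<And>m. bounded_op (b m)"
    and strict_mono_n: "strict_mono n"
    and strict_mono_cut: "strict_mono cut"
    and finite_block: "\<And>k. finite (I k)"
    and block_between_cuts: "\<And>k. I k \<subseteq> {cut k..<cut (Suc k)}"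
    and block_coeffs: "\<And>k. (\<Sum>i\<in>I k. (cmod (\<alpha> k i))\<^sup>2) \<le> 1"
    and hump: "\<And>k. \<eta> \<le> norm (offdiag (I k) (\<alpha> k) (l2_op (b (n k))))"
    and small_before: "\<And>k. (\<Sum>m<cut k. norm (l2_op (b (n k)) (E m))) < \<eta> / 2 ^ (k + 4)"
    and small_after: "\<And>k. small_beyond (l2_op (b (n k))) (cut (Suc k)) (\<eta> / 2 ^ (k + 4))"
begin

lemma eta_pos: "\<eta> > 0"
  using small_before[of 0] sum_nonneg[of "{..<cut 0}" "\<lambda>m. norm (l2_op (b (n 0)) (E m))"]
  by simp

lemma norm_offdiag_cross:
  assumes "j \<noteq> k"
  shows "norm (offdiag (I k) (\<alpha> k) (l2_op (b (n j)))) \<le> 2 * (\<eta> / 2 ^ (j + 4))"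
proof (cases "k < j")
  case True
  hence "cut (Suc k) \<le> cut j"
    using strict_mono_cut by (simp add: strict_mono_less_eq Suc_leI)
  hence "I k \<subseteq> {..<cut j}"
    using block_between_cuts[of k] by auto
  have "norm (offdiag (I k) (\<alpha> k) (l2_op (b (n j)))) \<le> 2 * (\<Sum>m<cut j. norm (l2_op (b (n j)) (E m)))"
    using bounded_clinear_l2_op[OF bounded] finite_block[of k] \<open>I k \<subseteq> {..<cut j}\<close>
      norm_le_1_of_sum_sq_le_1[OF finite_block block_coeffs]
    by (rule norm_offdiag_le_head)
  thus ?thesis
    using small_before[of j] by linarith
next
  case False
  with assms have "cut (Suc j) \<le> cut k"
    using strict_mono_cut by (simp add: strict_mono_less_eq Suc_leI)
  hence "I k \<subseteq> {cut (Suc j)..}"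
    using block_between_cuts[of k] by auto
  with small_after[of j] finite_block[of k] show ?thesis
    using block_coeffs[of k] by (intro norm_offdiag_le_tail) auto
qed

lemma norm_offdiag_others_le:
  assumes F: "finite F" "F \<subseteq> range n"
  shows "norm (\<Sum>m\<in>F - {n k}. offdiag (I k) (\<alpha> k) (l2_op (b m))) \<le> \<eta> / 4"
proof -
  define J where "J = n -` (F - {n k})"
  have inj: "inj n"
    using strict_mono_n by (rule strict_mono_imp_inj_on)
  have "finite J"
    unfolding J_def using F(1) by (intro finite_vimageI inj) simp
  have "F - {n k} = n ` J"
    unfolding J_def using F(2) by (auto simp: image_vimage_eq)
  have "norm (\<Sum>m\<in>F - {n k}. offdiag (I k) (\<alpha> k) (l2_op (b m)))
      \<le> (\<Sum>m\<in>F - {n k}. norm (offdiag (I k) (\<alpha> k) (l2_op (b m))))"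
    by (rule norm_sum)
  also have "\<dots> = (\<Sum>j\<in>J. norm (offdiag (I k) (\<alpha> k) (l2_op (b (n j)))))"
    unfolding \<open>F - {n k} = n ` J\<close>
    by (rule sum.reindex_cong[where l = n]) (simp_all add: inj_on_subset[OF inj])
  also have "\<dots> \<le> (\<Sum>j\<in>J. 2 * (\<eta> / 2 ^ (j + 4)))"
    by (rule sum_mono) (rule norm_offdiag_cross, auto simp: J_def)
  also have "\<dots> \<le> \<eta> / 4"
    using \<open>finite J\<close> eta_pos by (intro sum_geometric_le) simp_all
  finally show ?thesis .
qed

lemma norm_offdiag_partial_sum_ge:
  assumes F: "finite F" "F \<subseteq> range n" "n k \<in> F"
  shows "3 * \<eta> / 4 \<le> norm (\<Sum>m\<in>F. offdiag (I k) (\<alpha> k) (l2_op (b m)))"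
proof -
  define others where "others = (\<Sum>m\<in>F - {n k}. offdiag (I k) (\<alpha> k) (l2_op (b m)))"
  have "(\<Sum>m\<in>F. offdiag (I k) (\<alpha> k) (l2_op (b m))) = offdiag (I k) (\<alpha> k) (l2_op (b (n k))) + others"
    using F by (simp add: others_def sum.remove)
  hence "norm (offdiag (I k) (\<alpha> k) (l2_op (b (n k))))
      \<le> norm (\<Sum>m\<in>F. offdiag (I k) (\<alpha> k) (l2_op (b m))) + norm others"
    using norm_triangle_ineq4[of "\<Sum>m\<in>F. offdiag (I k) (\<alpha> k) (l2_op (b m))" others] by simp
  thus ?thesis
    using hump[of k] norm_offdiag_others_le[OF F(1,2), of k] unfolding others_def by linarith
qed

theorem not_sot_sum_in_diag_plus_compact:
  assumes S: "has_sot_sum b (range n) S"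
  shows "\<not> in_diag_plus_compact basis_coords S"
proof
  assume "in_diag_plus_compact basis_coords S"
  then obtain N where offdiag_S: "\<And>I \<alpha>. finite I \<Longrightarrow> I \<subseteq> {N..} \<Longrightarrow> (\<Sum>i\<in>I. (cmod (\<alpha> i))\<^sup>2) \<le> 1 \<Longrightarrow>
      norm (offdiag I \<alpha> (l2_op S)) \<le> 2 * (\<eta> / 8)"
    using diag_plus_compact_offdiag_small[of S "\<eta> / 8"] eta_pos by auto
  define k where "k = N"
  have "N \<le> cut k"
    unfolding k_def using strict_mono_cut by (rule seq_suble)
  hence "norm (offdiag (I k) (\<alpha> k) (l2_op S)) \<le> \<eta> / 4"
    using block_between_cuts[of k] finite_block block_coeffs offdiag_S[of "I k" "\<alpha> k"] by force
  moreover obtain F0 where F0: "finite F0" "F0 \<subseteq> range n" "\<And>F. finite F \<Longrightarrow> F0 \<subseteq> F \<Longrightarrow> F \<subseteq> range n \<Longrightarrow>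
      norm (offdiag (I k) (\<alpha> k) (l2_op S) - (\<Sum>m\<in>F. offdiag (I k) (\<alpha> k) (l2_op (b m)))) \<le> \<eta> / 8"
    using has_sot_sum_offdiag_approx[OF S bounded finite_block, of k "\<alpha> k" "\<eta> / 8"] eta_pos
      norm_le_1_of_sum_sq_le_1[OF finite_block block_coeffs] by auto
  moreover have "3 * \<eta> / 4 \<le> norm (\<Sum>m\<in>insert (n k) F0. offdiag (I k) (\<alpha> k) (l2_op (b m)))"
    using F0(1,2) by (intro norm_offdiag_partial_sum_ge) auto
  moreover have "norm (offdiag (I k) (\<alpha> k) (l2_op S) - (\<Sum>m\<in>insert (n k) F0. offdiag (I k) (\<alpha> k) (l2_op (b m))))
      \<le> \<eta> / 8"
    using F0 by (intro F0(3)) auto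
  ultimately show False
    using eta_pos norm_triangle_ineq4[of "offdiag (I k) (\<alpha> k) (l2_op S)"
        "offdiag (I k) (\<alpha> k) (l2_op S) - (\<Sum>m\<in>insert (n k) F0. offdiag (I k) (\<alpha> k) (l2_op (b m)))"]
    by simp
qed

end

section \<open>Building the hump from a counterexample\<close>

locale compact_sot_null = orthonormal_basis +
  fixes b :: "nat \<Rightarrow> (nat \<Rightarrow> complex) \<Rightarrow> nat \<Rightarrow> complex"
  assumes compact: "\<And>k. compact_op (b k)"
    and sot_null: "sot_null b"
begin

lemma bounded: "bounded_op (b k)"
  using compact by (simp add: compact_op_def)

definition diag_defect :: "nat \<Rightarrow> l2 \<Rightarrow> l2" where
  "diag_defect k x = l2_op (cond_exp basis_coords (b k)) x - l2_op (b k) x"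

lemma bounded_linear_diag_defect: "bounded_linear (diag_defect k)"
  unfolding diag_defect_def
  by (intro bounded_linear_sub bounded_clinear_imp_bounded_linear bounded_clinear_l2_op
      bounded_op_cond_exp bounded)

lemma diag_defect_lincomb: "finite I \<Longrightarrow> diag_defect k (lincomb I \<alpha>) = - offdiag I \<alpha> (l2_op (b k))"
  unfolding diag_defect_def by (rule cond_exp_minus_lincomb[OF bounded])

lemma initial_columns_tendsto_zero: "(\<lambda>k. \<Sum>m<N. norm (l2_op (b k) (E m))) \<longlonglongrightarrow> 0"
proof -
  have "(\<lambda>k. norm (l2_op (b k) (E m))) \<longlonglongrightarrow> 0" for m
    using sot_null coords[of "E m"] by (simp add: sot_null_def norm_l2_op[OF bounded])
  thus ?thesis
    using tendsto_sum[of "{..<N}" "\<lambda>m k. norm (l2_op (b k) (E m))" "\<lambda>_. 0"] by simp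
qed

text \<open>Truncate \<open>x\<close> by Parseval and drop its first \<open>N\<close> coordinates, on which \<open>b k\<close> is
  negligible.\<close>

lemma large_defect_on_tail_block:
  assumes x: "norm x \<le> 1" and big: "\<epsilon> < norm (diag_defect k x)"
    and head: "(\<Sum>m<N. norm (l2_op (b k) (E m))) < \<epsilon> / 8"
  shows "\<exists>K. (\<Sum>i\<in>{N..<K}. (cmod (cinner x (E i)))\<^sup>2) \<le> 1 \<and>
    \<epsilon> / 2 \<le> norm (offdiag {N..<K} (\<lambda>i. cinner x (E i)) (l2_op (b k)))"
proof -
  interpret defect: bounded_linear "diag_defect k"
    by (rule bounded_linear_diag_defect)
  define c where "c m = cinner x (E m)" for m
  have \<epsilon>: "\<epsilon> > 0"
    using head sum_nonneg[of "{..<N}" "\<lambda>m. norm (l2_op (b k) (E m))"] by simp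
  obtain K0 where K0: "\<And>K. K \<ge> K0 \<Longrightarrow> norm (diag_defect k (proj_span {..<K} x) - diag_defect k x) < \<epsilon> / 8"
    using LIMSEQ_D[OF defect.tendsto[OF parseval], of "\<epsilon> / 8"] \<epsilon> by auto
  define K where "K = max K0 N"
  have split: "lincomb {N..<K} c = proj_span {..<K} x - proj_span {..<N} x"
  proof -
    have "proj_span {..<K} x - proj_span {..<N} x = lincomb ({..<K} - {..<N}) c"
      unfolding proj_span_def c_def[symmetric] by (rule lincomb_diff) (auto simp: K_def)
    also have "{..<K} - {..<N} = {N..<K}"
      by auto
    finally show ?thesis ..
  qed
  have "norm (diag_defect k (proj_span {..<N} x)) \<le> 2 * (\<Sum>m<N. norm (l2_op (b k) (E m)))"
    unfolding proj_span_def c_def[symmetric] diag_defect_lincomb[OF finite_lessThan] norm_minus_cancel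
    using norm_coeff_le[of x] x
    by (intro norm_offdiag_le_head bounded_clinear_l2_op bounded) (auto simp: c_def intro: order_trans)
  moreover have "norm (diag_defect k (proj_span {..<K} x) - diag_defect k x) < \<epsilon> / 8"
    by (rule K0) (simp add: K_def)
  moreover have "norm (diag_defect k x) \<le> norm (diag_defect k (lincomb {N..<K} c))
      + norm (diag_defect k (proj_span {..<K} x) - diag_defect k x) + norm (diag_defect k (proj_span {..<N} x))"
  proof -
    define y where "y = diag_defect k (lincomb {N..<K} c)"
    define u where "u = diag_defect k (proj_span {..<K} x) - diag_defect k x"
    define v where "v = diag_defect k (proj_span {..<N} x)"
    have "diag_defect k x = y - u + v"
      unfolding y_def u_def v_def split defect.diff by simp
    hence "norm (diag_defect k x) \<le> norm (y - u) + norm v"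
      by (simp add: norm_triangle_ineq)
    also have "norm (y - u) \<le> norm y + norm u"
      by (rule norm_triangle_ineq4)
    finally show ?thesis
      by (simp add: y_def u_def v_def)
  qed
  ultimately have "\<epsilon> / 2 \<le> norm (diag_defect k (lincomb {N..<K} c))"
    using big head \<epsilon> by linarith
  moreover have "(\<Sum>i\<in>{N..<K}. (cmod (c i))\<^sup>2) \<le> 1"
    using bessel_inequality[of "{N..<K}" x] x by (simp add: c_def power_le_one order_trans)
  ultimately show ?thesis
    unfolding diag_defect_lincomb[OF finite_atLeastLessThan] norm_minus_cancel c_def by blast
qed

lemma hump_block_exists:
  assumes bad: "\<And>k0. \<exists>k\<ge>k0. \<exists>x. norm x \<le> 1 \<and> \<epsilon> < norm (diag_defect k x)"
    and \<epsilon>: "\<epsilon> > 0" and \<delta>: "\<delta> > 0"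
  shows "\<exists>k I \<alpha> K. k \<ge> k0 \<and> finite I \<and> I \<subseteq> {N..<K} \<and> (\<Sum>i\<in>I. (cmod (\<alpha> i))\<^sup>2) \<le> 1 \<and>
    (\<Sum>m<N. norm (l2_op (b k) (E m))) < \<delta> \<and> \<epsilon> / 2 \<le> norm (offdiag I \<alpha> (l2_op (b k)))"
proof -
  define s where "s k = (\<Sum>m<N. norm (l2_op (b k) (E m)))" for k
  obtain k1 where "\<forall>k\<ge>k1. norm (s k - 0) < min \<delta> (\<epsilon> / 8)"
    using LIMSEQ_D[OF initial_columns_tendsto_zero[of N], of "min \<delta> (\<epsilon> / 8)"] \<delta> \<epsilon>
    unfolding s_def by auto
  hence k1: "s k < min \<delta> (\<epsilon> / 8)" if "k \<ge> k1" for k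
    using that abs_ge_self[of "s k"] by fastforce
  obtain k x where k: "k \<ge> max k0 k1" and "norm x \<le> 1" "\<epsilon> < norm (diag_defect k x)"
    using bad by blast
  moreover have "s k < \<epsilon> / 8" "s k < \<delta>"
    using k1[of k] k by simp_all
  ultimately obtain K where "(\<Sum>i\<in>{N..<K}. (cmod (cinner x (E i)))\<^sup>2) \<le> 1"
    "\<epsilon> / 2 \<le> norm (offdiag {N..<K} (\<lambda>i. cinner x (E i)) (l2_op (b k)))"
    using large_defect_on_tail_block unfolding s_def by blast
  with k \<open>s k < \<delta>\<close> show ?thesis
    unfolding s_def by (intro exI[of _ k] exI[of _ "{N..<K}"] exI[of _ "\<lambda>i. cinner x (E i)"] exI[of _ K]) auto
qed

lemma hump_exists:
  assumes bad: "\<And>k0. \<exists>k\<ge>k0. \<exists>x. norm x \<le> 1 \<and> \<epsilon> < norm (diag_defect k x)"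
    and \<epsilon>: "\<epsilon> > 0" and \<delta>: "\<delta> > 0"
  shows "\<exists>k I \<alpha> hi. k \<ge> k0 \<and> finite I \<and> I \<subseteq> {N..<hi} \<and> N < hi \<and> (\<Sum>i\<in>I. (cmod (\<alpha> i))\<^sup>2) \<le> 1 \<and>
    (\<Sum>m<N. norm (l2_op (b k) (E m))) < \<delta> \<and> \<epsilon> / 2 \<le> norm (offdiag I \<alpha> (l2_op (b k))) \<and>
    small_beyond (l2_op (b k)) hi \<delta>"
proof -
  from hump_block_exists[OF bad \<epsilon> \<delta>, of k0 N] obtain k I \<alpha> K where
    hump: "k \<ge> k0" "finite I" "I \<subseteq> {N..<K}" "(\<Sum>i\<in>I. (cmod (\<alpha> i))\<^sup>2) \<le> 1"
      "(\<Sum>m<N. norm (l2_op (b k) (E m))) < \<delta>" "\<epsilon> / 2 \<le> norm (offdiag I \<alpha> (l2_op (b k)))"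
    by blast
  obtain M where "small_beyond (l2_op (b k)) M \<delta>"
    using compact_op_small_beyond[OF compact \<delta>] by blast
  hence "small_beyond (l2_op (b k)) (max (Suc N) (max K M)) \<delta>"
    by (rule small_beyond_mono) simp
  moreover have "I \<subseteq> {N..<max (Suc N) (max K M)}"
    using hump(3) by (rule order_trans) auto
  ultimately show ?thesis
    using hump by (intro exI[of _ k] exI[of _ I] exI[of _ \<alpha>] exI[of _ "max (Suc N) (max K M)"]) simp
qed

lemma gliding_hump_exists:
  assumes bad: "\<And>k0. \<exists>k\<ge>k0. \<exists>x. norm x \<le> 1 \<and> \<epsilon> < norm (diag_defect k x)" and \<epsilon>: "\<epsilon> > 0"
  shows "\<exists>n cut I \<alpha>. gliding_hump E b n cut I \<alpha> (\<epsilon> / 2)"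
proof -
  define \<delta> where "\<delta> j = \<epsilon> / 2 / 2 ^ (j + 4)" for j :: nat
  define P where "P j = (\<lambda>(k, I, \<alpha>, lo, hi). finite I \<and> I \<subseteq> {lo..<hi} \<and> lo < hi \<and>
    (\<Sum>i\<in>I. (cmod (\<alpha> i))\<^sup>2) \<le> 1 \<and> (\<Sum>m<lo. norm (l2_op (b k) (E m))) < \<delta> j \<and>
    \<epsilon> / 2 \<le> norm (offdiag I \<alpha> (l2_op (b k))) \<and> small_beyond (l2_op (b k)) hi (\<delta> j))" for j
  have step: "\<exists>k I \<alpha> hi. k \<ge> k0 \<and> P j (k, I, \<alpha>, N, hi)" for j k0 N
    using hump_exists[OF bad \<epsilon>, of "\<delta> j" k0 N] \<epsilon> unfolding P_def \<delta>_def by simp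
  \<comment> \<open>states are tuples \<open>(k, I, \<alpha>, lo, hi)\<close>; each block starts where the previous one ended\<close>
  have "\<exists>f. \<forall>j. P j (f j) \<and> fst (f j) < fst (f (Suc j)) \<and>
      fst (snd (snd (snd (f (Suc j))))) = snd (snd (snd (snd (f j))))"
  proof (rule dependent_nat_choice)
    show "\<exists>s. P 0 s"
      using step[of 0 0 0] by blast
    fix s j
    show "\<exists>t. P (Suc j) t \<and> fst s < fst t \<and> fst (snd (snd (snd t))) = snd (snd (snd (snd s)))"
      using step[of "Suc (fst s)" "Suc j" "snd (snd (snd (snd s)))"] by force
  qed
  then obtain f where f: "\<And>j. P j (f j)" "\<And>j. fst (f j) < fst (f (Suc j))"
    "\<And>j. fst (snd (snd (snd (f (Suc j))))) = snd (snd (snd (snd (f j))))"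
    by blast
  define n where "n j = fst (f j)" for j
  define I where "I j = fst (snd (f j))" for j
  define \<alpha> where "\<alpha> j = fst (snd (snd (f j)))" for j
  define cut where "cut j = fst (snd (snd (snd (f j))))" for j
  have f_eq: "f j = (n j, I j, \<alpha> j, cut j, cut (Suc j))" for j
    using f(3)[of j] by (simp add: n_def I_def \<alpha>_def cut_def)
  have props: "finite (I j)" "I j \<subseteq> {cut j..<cut (Suc j)}" "cut j < cut (Suc j)"
    "(\<Sum>i\<in>I j. (cmod (\<alpha> j i))\<^sup>2) \<le> 1" "(\<Sum>m<cut j. norm (l2_op (b (n j)) (E m))) < \<delta> j"
    "\<epsilon> / 2 \<le> norm (offdiag (I j) (\<alpha> j) (l2_op (b (n j))))"
    "small_beyond (l2_op (b (n j))) (cut (Suc j)) (\<delta> j)" for j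
    using f(1)[of j] unfolding f_eq P_def by simp_all
  have "strict_mono n" "strict_mono cut"
    using f(2) props(3) by (simp_all add: strict_mono_Suc_iff n_def)
  hence "gliding_hump E b n cut I \<alpha> (\<epsilon> / 2)"
    using props bounded orthonormal_basis_axioms
    by (simp add: gliding_hump_def gliding_hump_axioms_def \<delta>_def)
  thus ?thesis
    by blast
qed

theorem diag_defect_uniformly_small:
  assumes sums: "\<And>M. \<exists>S. has_sot_sum b M S \<and> in_diag_plus_compact basis_coords S"
    and \<epsilon>: "\<epsilon> > 0"
  shows "\<exists>k0. \<forall>k\<ge>k0. \<forall>x. norm x \<le> 1 \<longrightarrow> norm (diag_defect k x) \<le> \<epsilon>"
proof (rule ccontr)
  assume "\<not> ?thesis"
  hence "\<exists>k\<ge>k0. \<exists>x. norm x \<le> 1 \<and> \<epsilon> < norm (diag_defect k x)" for k0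
    by (simp add: not_le)
  then obtain n cut I \<alpha> where "gliding_hump E b n cut I \<alpha> (\<epsilon> / 2)"
    using gliding_hump_exists \<epsilon> by blast
  then interpret gliding_hump E b n cut I \<alpha> "\<epsilon> / 2" .
  from sums obtain S where "has_sot_sum b (range n) S" "in_diag_plus_compact basis_coords S"
    by blast
  thus False
    using not_sot_sum_in_diag_plus_compact by blast
qed

end

lemma orthonormal_basis_mk_l2:
  assumes "onb e"
  shows "orthonormal_basis (\<lambda>k. mk_l2 (e k))" and "(\<lambda>k. coords (mk_l2 (e k))) = e"
proof -
  have e: "e k \<in> ell2" for k
    using assms by (simp add: onb_def)
  show basis: "(\<lambda>k. coords (mk_l2 (e k))) = e"
    by (simp add: mk_l2_inverse e)
  show "orthonormal_basis (\<lambda>k. mk_l2 (e k))"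
  proof
    show "cinner (mk_l2 (e m)) (mk_l2 (e n)) = (if m = n then 1 else 0)" for m n
      using assms by (simp add: onb_def cinner_def mk_l2_inverse e)
    show "x = 0" if "\<And>n. cinner x (mk_l2 (e n)) = 0" for x
    proof -
      have "coords x = 0"
        using assms coords[of x] that by (simp add: onb_def cinner_def mk_l2_inverse e)
      thus "x = 0"
        by (simp add: coords_inject[symmetric] coords_zero)
    qed
  qed
qed

theorem lemma2p1:
  fixes e :: "nat \<Rightarrow> (nat \<Rightarrow> complex)"
    and b :: "nat \<Rightarrow> ((nat \<Rightarrow> complex) \<Rightarrow> (nat \<Rightarrow> complex))"
  assumes "onb e"
    and "\<And>n. compact_op (b n)"
    and "sot_null b"
    and "\<And>M. \<exists>S. has_sot_sum b M S \<and> in_diag_plus_compact e S"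
  shows "(\<lambda>n. opnorm (\<lambda>x. cond_exp e (b n) x - b n x)) \<longlonglongrightarrow> 0"
proof -
  interpret compact_sot_null "\<lambda>k. mk_l2 (e k)" b
    using orthonormal_basis_mk_l2(1)[OF assms(1)] assms(2,3)
    by (simp add: compact_sot_null_def compact_sot_null_axioms_def)
  note basis = orthonormal_basis_mk_l2(2)[OF assms(1)]
  show ?thesis
  proof (rule LIMSEQ_I)
    fix r :: real
    assume "r > 0"
    then obtain k0 where k0: "\<forall>k\<ge>k0. \<forall>x. norm x \<le> 1 \<longrightarrow> norm (diag_defect k x) \<le> r / 2"
      using diag_defect_uniformly_small[of "r / 2"] assms(4) unfolding basis by auto
    have op: "bounded_op (\<lambda>x. cond_exp e (b k) x - b k x)" for k
      using bounded_op_cond_exp[OF bounded, of k] unfolding basis by (intro bounded_op_diff bounded)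
    have "opnorm (\<lambda>x. cond_exp e (b k) x - b k x) \<le> r / 2" if "k \<ge> k0" for k
      using k0 that bounded_op_cond_exp[OF bounded, of k]
      by (intro opnorm_le op) (simp add: l2_op_diff bounded diag_defect_def basis)
    thus "\<exists>k0. \<forall>k\<ge>k0. norm (opnorm (\<lambda>x. cond_exp e (b k) x - b k x) - 0) < r"
      using \<open>r > 0\<close> opnorm_nonneg[OF op] by fastforce
  qed
qed

end
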